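(* Define normal-ordered differential polynomials $\mathscr{P}^{(k)}_n$ in variables $A_{n-1},\dots,A_1,Q$ recursively by $\mathscr{P}^{(k)}_1(Q)=Q$ and, for $n\ge2$, $$\mathscr{P}^{(k)}_n(A_{n-1},\dots,A_1,Q)=(k+n-1)\,\partial\mathscr{P}^{(k+1)}_{n-1}+:\Big(Q+\sum_{i=1}^{n-1}A_i\Big)\mathscr{P}^{(k+1)}_{n-1}:,$$ where $\mathscr{P}^{(k+1)}_{n-1}=\mathscr{P}^{(k+1)}_{n-1}(A_{n-2},\dots,A_1,Q)$. Then, in the $n[0]$ realization at level $k$ (with $A_i,Q$ the currents of that realization), the field $\mathcal{F}^{(k)}_{n[0]}=-:\mathscr{P}^{(k)}_n(A_{n-1},\dots,A_1,Q)e^{-\Xi}:$ commutes with the screenings $E_i$ ($1\le i\le n-1$) and $\Psi$, i.e. lies in $\mathcal{W}_{n[0]}(k)$. Equivalently, $\mathcal{F}^{(k)}_{n[0]}=\big((k+n-1)\partial+n\mathcal{H}^{(k)}_{n[0]}-(n-1)\mathcal{H}^{(k+1)}_{(n-1)[0]}\big)\mathcal{F}^{(k+1)}_{(n-1)[0]}$, where the level-$(k+1)$ rank-$(n-1)$ realization is built from the same fields $A_{n-2},\dots,A_1,Q,Y$.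
   Context: Setup for $m=0$ at rank $n\ge2$ and generic level $k$ ($k\neq -n$), $K=k+n$: free scalar fields $\varphi=(\varphi_1,\dots,\varphi_{n+1})$ with $\partial\varphi_i(z)\partial\varphi_j(w)\sim\delta_{ij}(z-w)^{-2}$; vectors $a_{n-1},\dots,a_1,\psi,\xi\in\mathbb{C}^{n+1}$ with nonzero products $(a_i,a_i)=2K$, $(a_i,a_{i+1})=-K$ ($1\le i\le n-2$), $(a_1,\psi)=-K$, $(\psi,\psi)=1$, $(\psi,\xi)=1$, all others (incl. $(\xi,\xi)$, $(a_i,\xi)$) zero. Currents $A_i=(a_i,\partial\varphi)$, $Q=(\psi,\partial\varphi)$, $Y=(\xi,\partial\varphi)$, field $\Xi=(\xi,\varphi)$. Screenings $E_i=\oint e^{(a_i,\varphi)}$, $\Psi=\oint e^{(\psi,\varphi)}$; a field $X(w)$ commutes with $\oint s$ if the residue at $z=w$ of $s(z)X(w)$ vanishes. $\mathcal{W}_{n[0]}(k)$ is the centralizer of these screenings in the space of fields $:P(\partial\varphi)e^{p\Xi}:$, $p\in\mathbb{Z}$. Note that the rank-$(n-1)$, level-$(k+1)$ realization has the same value $K=(k+1)+(n-1)$, so its vectors $a_{n-2},\dots,a_1,\psi,\xi$ can be identified with those of the rank-$n$ level-$k$ one. $\mathcal{H}^{(k)}_{n[0]}=\ell_n(k)Y+\sum_{i=1}^{n-1}\frac{n-i}{n}A_i+Q$ with $\ell_n(k)=\frac{n-1}{n}k+n-2$. *)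

theory Defs
  imports Complex_Main "HOL-Library.Poly_Mapping"
begin

text \<open>Fields are normal-ordered products :P(d phi) e^{(beta,phi)}: .
  Inside normal ordering all free-boson fields commute, so P is an ordinary commutative
  polynomial in the variables x_(j,m) = d^m phi_j  (j < N, m >= 1), N = n+1 the number of
  scalar fields.\<close>

type_synonym var = "nat \<times> nat"
type_synonym monom = "var \<Rightarrow>\<^sub>0 nat"
type_synonym dpoly = "monom \<Rightarrow>\<^sub>0 complex"
type_synonym vec = "nat \<Rightarrow> complex"
type_synonym lpoly = "int \<Rightarrow>\<^sub>0 dpoly"   \<comment> \<open>Laurent polynomials in u = z - w\<close>
type_synonym vfield = "dpoly \<times> vec"   \<comment> \<open>(P, beta) stands for :P e^{(beta,phi)}:\<close>

definition X :: "var \<Rightarrow> dpoly" where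
  "X v = Poly_Mapping.single (Poly_Mapping.single v 1) 1"

definition pC :: "complex \<Rightarrow> dpoly" where
  "pC c = Poly_Mapping.single 0 c"

definition ip :: "nat \<Rightarrow> vec \<Rightarrow> vec \<Rightarrow> complex" where
  "ip N x y = (\<Sum>j<N. x j * y j)"

text \<open>(x, d^m phi) as a polynomial; m = 1 gives the current (x, d phi)\<close>
definition cur :: "nat \<Rightarrow> vec \<Rightarrow> nat \<Rightarrow> dpoly" where
  "cur N x m = (\<Sum>j<N. pC (x j) * X (j, m))"

definition peval :: "(complex \<Rightarrow> 'b::comm_ring_1) \<Rightarrow> (var \<Rightarrow> 'b) \<Rightarrow> dpoly \<Rightarrow> 'b" where
  "peval c \<sigma> P = sum (\<lambda>mu::monom. c (Poly_Mapping.lookup P mu) * prod (\<lambda>v::var. \<sigma> v ^ Poly_Mapping.lookup mu v) (Poly_Mapping.keys mu)) (Poly_Mapping.keys P)"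

text \<open>the derivative d on differential polynomials: the derivation x_(j,m) |-> x_(j,m+1)\<close>
definition Dp :: "dpoly \<Rightarrow> dpoly" where
  "Dp P = (\<Sum>\<mu>::monom\<in>Poly_Mapping.keys P. pC (Poly_Mapping.lookup P \<mu>) *
      (\<Sum>v::var\<in>Poly_Mapping.keys \<mu>. of_nat (Poly_Mapping.lookup \<mu> v) * X (fst v, Suc (snd v)) *
          Poly_Mapping.single (\<mu> - Poly_Mapping.single v 1) 1))"

definition lC :: "dpoly \<Rightarrow> lpoly" where
  "lC p = Poly_Mapping.single 0 p"

definition U :: "int \<Rightarrow> lpoly" where
  "U d = Poly_Mapping.single d 1"

text \<open>Wick contraction of e^{(alpha,phi)}(z) with d^m phi_j(w):
  alpha_j d_w^m log(z-w) = - alpha_j (m-1)! u^{-m}\<close>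
definition contr_subst :: "vec \<Rightarrow> var \<Rightarrow> lpoly" where
  "contr_subst \<alpha> v = lC (X v) - lC (pC (\<alpha> (fst v) * fact (snd v - 1))) * U (- int (snd v))"

text \<open>S_r = coefficient of u^r in exp(sum_{m>=1} u^m/m! (alpha, d^m phi)(w))
   (Taylor expansion of e^{(alpha,phi)(z)} around w; truncation at m <= r is exact)\<close>
definition Tser :: "nat \<Rightarrow> vec \<Rightarrow> nat \<Rightarrow> lpoly" where
  "Tser N \<alpha> r = (\<Sum>m\<in>{1..r}. lC (pC (1 / fact m) * cur N \<alpha> m) * U (int m))"

definition Sch :: "nat \<Rightarrow> vec \<Rightarrow> nat \<Rightarrow> dpoly" where
  "Sch N \<alpha> r = (\<Sum>q\<le>r. pC (1 / fact q) * Poly_Mapping.lookup (Tser N \<alpha> r ^ q) (int r))"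

text \<open>Laurent expansion in u = z-w of the singular factor of e^{(alpha,phi)}(z) :P e^{(beta,phi)}:(w),
  where d = (alpha,beta) is the exponent of (z-w)\<close>
definition Lsing :: "vec \<Rightarrow> dpoly \<Rightarrow> int \<Rightarrow> lpoly" where
  "Lsing \<alpha> P d = U d * peval (\<lambda>c. lC (pC c)) (contr_subst \<alpha>) P"

text \<open>polynomial part R of Res_{z=w} e^{(alpha,phi)}(z) :P e^{(beta,phi)}:(w) = :R e^{(alpha+beta,phi)}:(w)\<close>
definition res_poly :: "nat \<Rightarrow> vec \<Rightarrow> dpoly \<Rightarrow> int \<Rightarrow> dpoly" where
  "res_poly N \<alpha> P d =
     (\<Sum>r\<in>{r::nat. - 1 - int r \<in> Poly_Mapping.keys (Lsing \<alpha> P d)}.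
        Poly_Mapping.lookup (Lsing \<alpha> P d) (- 1 - int r) * Sch N \<alpha> r)"

text \<open>the field :P e^{(beta,phi)}: commutes with the screening \<oint> e^{(alpha,phi)}\<close>
definition commutes_scr :: "nat \<Rightarrow> vec \<Rightarrow> vfield \<Rightarrow> bool" where
  "commutes_scr N \<alpha> F \<longleftrightarrow>
     (\<exists>d::int. ip N \<alpha> (snd F) = of_int d \<and> res_poly N \<alpha> (fst F) d = 0)"

definition in_W :: "nat \<Rightarrow> (nat \<Rightarrow> vec) \<Rightarrow> vec \<Rightarrow> vec \<Rightarrow> vfield \<Rightarrow> bool" where
  "in_W n a \<psi> \<xi> F \<longleftrightarrow>
     (\<exists>p::int. snd F = (\<lambda>j. of_int p * \<xi> j)) \<and>
     (\<forall>i\<in>{1..n-1}. commutes_scr (n+1) (a i) F) \<and> commutes_scr (n+1) \<psi> F"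

fun Pcal :: "complex \<Rightarrow> nat \<Rightarrow> (nat \<Rightarrow> dpoly) \<Rightarrow> dpoly \<Rightarrow> dpoly" where
  "Pcal k 0 A Q = 0"
| "Pcal k (Suc 0) A Q = Q"
| "Pcal k (Suc (Suc n)) A Q =
     pC (k + of_nat (Suc n)) * Dp (Pcal (k + 1) (Suc n) A Q)
     + (Q + (\<Sum>i\<in>{1..Suc n}. A i)) * Pcal (k + 1) (Suc n) A Q"

definition fder :: "nat \<Rightarrow> vfield \<Rightarrow> vfield" where
  "fder N F = (Dp (fst F) + fst F * cur N (snd F) 1, snd F)"

definition fmul :: "dpoly \<Rightarrow> vfield \<Rightarrow> vfield" where
  "fmul h F = (h * fst F, snd F)"

definition fadd :: "vfield \<Rightarrow> vfield \<Rightarrow> vfield" where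
  "fadd F G = (fst F + fst G, snd F)"

definition fscale :: "complex \<Rightarrow> vfield \<Rightarrow> vfield" where
  "fscale c F = (pC c * fst F, snd F)"

text \<open>Realization n[0] at level k inside the ambient free-field space with N scalars:
  currents A_i = (a_i, d phi), Q = (psi, d phi), Y = (xi, d phi)\<close>
definition ell :: "nat \<Rightarrow> complex \<Rightarrow> complex" where
  "ell n k = (of_nat n - 1) / of_nat n * k + of_nat n - 2"

definition Hcal :: "nat \<Rightarrow> nat \<Rightarrow> complex \<Rightarrow> (nat \<Rightarrow> vec) \<Rightarrow> vec \<Rightarrow> vec \<Rightarrow> dpoly" where
  "Hcal N n k a \<psi> \<xi> = pC (ell n k) * cur N \<xi> 1
      + (\<Sum>i\<in>{1..n-1}. pC ((of_nat n - of_nat i) / of_nat n) * cur N (a i) 1) + cur N \<psi> 1"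

definition Fcal :: "nat \<Rightarrow> nat \<Rightarrow> complex \<Rightarrow> (nat \<Rightarrow> vec) \<Rightarrow> vec \<Rightarrow> vec \<Rightarrow> vfield" where
  "Fcal N n k a \<psi> \<xi> = (- Pcal k n (\<lambda>i. cur N (a i) 1) (cur N \<psi> 1), - \<xi>)"

end

theory Submission
  imports Defs
begin

(* The residue of a screening current e^(alpha,phi)(z) against :P e^(beta,phi):(w) is computed
   symbolically: Wick contraction replaces d^m phi_j in P by d^m phi_j - alpha_j (m-1)! u^-m
   (u = z - w), and the regular factor of e^(alpha,phi)(z) contributes the Schur polynomials S_r of
   its Taylor expansion, which satisfy (r+1) S_(r+1) = d S_r + (alpha, d phi) S_r.  Hence the
   coefficients C_t of u^t obey two transport rules:
     C_t(:(v, d phi) P:) = (v, d phi) C_t - (alpha, v) C_(t+1),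
     C_t(d P)            = d C_t + (alpha, d phi) C_t - (t + 1 - (alpha, beta)) C_(t+1).

   F is generated by G_0 = -e^(-Xi) and G_(m+1) = kappa d G_m + :J_m G_m: with kappa = k + n - 1
   and J_m = kappa Y + Q + A_1 + ... + A_m; the identity n H(k,n) - (n-1) H(k+1,n-1) = J_(n-1)
   gives the stated recursion.  By the transport rules the residue C_(-1)(G_(m+1)) is determined
   by C_(-1)(G_m) and (alpha, J_m) C_0(G_m).  Now (psi, J_m) = 0 for m >= 1, and (a_i, J_m) = 0
   unless m = i - 1 or m = i.  So Psi commutes with every G_m once it commutes with G_1, and E_i
   once it commutes with G_(i+1); in both cases the pole terms cancel because
   (psi, J_0) = kappa + 1 and (a_i, a_i) = 2 (kappa + 1). *)

declare One_nat_def [simp del]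

section \<open>Finitely supported maps\<close>

definition sum_terms :: "('a \<Rightarrow> 'b::zero \<Rightarrow> 'c::comm_monoid_add) \<Rightarrow> ('a \<Rightarrow>\<^sub>0 'b) \<Rightarrow> 'c" where
  "sum_terms f L = (\<Sum>s\<in>Poly_Mapping.keys L. f s (Poly_Mapping.lookup L s))"

lemma sum_terms_superset:
  assumes "finite S" "Poly_Mapping.keys L \<subseteq> S" "\<And>s. f s 0 = 0"
  shows "sum_terms f L = (\<Sum>s\<in>S. f s (Poly_Mapping.lookup L s))"
  unfolding sum_terms_def
  by (rule sum.mono_neutral_left) (use assms in \<open>auto simp: in_keys_iff\<close>)

lemma sum_terms_add:
  assumes "\<And>s a b. f s (a + b) = f s a + f s b" "\<And>s. f s 0 = 0"
  shows "sum_terms f (L + M) = sum_terms f L + sum_terms f M"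
proof -
  let ?S = "Poly_Mapping.keys L \<union> Poly_Mapping.keys M \<union> Poly_Mapping.keys (L + M)"
  have "sum_terms f (L + M) = (\<Sum>s\<in>?S. f s (Poly_Mapping.lookup (L + M) s))"
    by (rule sum_terms_superset) (auto simp: assms)
  also have "\<dots> = (\<Sum>s\<in>?S. f s (Poly_Mapping.lookup L s)) + (\<Sum>s\<in>?S. f s (Poly_Mapping.lookup M s))"
    by (simp add: lookup_add assms sum.distrib)
  also have "\<dots> = sum_terms f L + sum_terms f M"
    by (subst (1 2) sum_terms_superset[where S = ?S]) (auto simp: assms)
  finally show ?thesis .
qed

lemma sum_terms_single: "f s 0 = 0 \<Longrightarrow> sum_terms f (Poly_Mapping.single s p) = f s p"
  by (cases "p = 0") (auto simp: sum_terms_def)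

lemma sum_terms_zero [simp]: "sum_terms f 0 = 0"
  by (simp add: sum_terms_def)

lemma update_eq_add_single:
  "a \<notin> Poly_Mapping.keys f \<Longrightarrow> Poly_Mapping.update a b f = f + Poly_Mapping.single a b"
  by (intro poly_mapping_eqI) (auto simp: lookup_update lookup_add lookup_single in_keys_iff when_def)

lemma poly_mapping_induct [case_names zero single add]:
  assumes "P 0" "\<And>a b. P (Poly_Mapping.single a b)" "\<And>f g. P f \<Longrightarrow> P g \<Longrightarrow> P (f + g)"
  shows "P (f :: 'a \<Rightarrow>\<^sub>0 'b::monoid_add)"
proof (induction f rule: update_induct)
  case const
  show ?case by (rule assms(1))
next
  case (update f a b)
  then show ?case by (simp add: update_eq_add_single assms)
qed

lemma poly_mapping_sum_single:
  "(f :: 'a \<Rightarrow>\<^sub>0 'b::comm_monoid_add) = (\<Sum>s\<in>Poly_Mapping.keys f. Poly_Mapping.single s (Poly_Mapping.lookup f s))"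
  by (intro poly_mapping_eqI)
     (auto simp: lookup_sum lookup_single when_def in_keys_iff sum.delta' intro!: sum.neutral)

lemma additive_eqI:
  fixes F G :: "('a \<Rightarrow>\<^sub>0 'b::monoid_add) \<Rightarrow> 'c::monoid_add"
  assumes "\<And>f g. F (f + g) = F f + F g" "\<And>f g. G (f + g) = G f + G g"
    and "\<And>a b. F (Poly_Mapping.single a b) = G (Poly_Mapping.single a b)"
  shows "F f = G f"
proof (induction f rule: poly_mapping_induct)
  case zero
  show ?case using assms(3)[of undefined 0] by simp
next
  case (single a b)
  show ?case by (rule assms(3))
next
  case (add f g)
  then show ?case by (simp add: assms)
qed

lemma biadditive_eq_0:
  fixes B :: "('a \<Rightarrow>\<^sub>0 'b::monoid_add) \<Rightarrow> ('a \<Rightarrow>\<^sub>0 'b) \<Rightarrow> 'c::ab_group_add"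
  assumes left: "\<And>f g h. B (f + g) h = B f h + B g h"
    and right: "\<And>f g h. B f (g + h) = B f g + B f h"
    and single: "\<And>a b c d. B (Poly_Mapping.single a b) (Poly_Mapping.single c d) = 0"
  shows "B f g = 0"
proof -
  have B0: "B 0 h = 0" for h using left[of 0 0 h] by simp
  have "B (Poly_Mapping.single a b) h = 0" for a b h
    by (induction h rule: poly_mapping_induct) (use right[of _ 0 0] single in \<open>simp_all add: right\<close>)
  then show ?thesis
    by (induction f rule: poly_mapping_induct) (simp_all add: B0 left)
qed

lemma derivation_from_singles:
  fixes F :: "('a::monoid_add \<Rightarrow>\<^sub>0 'b::comm_ring_1) \<Rightarrow> ('a \<Rightarrow>\<^sub>0 'b)"
  assumes add: "\<And>f g. F (f + g) = F f + F g"
    and single: "\<And>a b c d. F (Poly_Mapping.single a b * Poly_Mapping.single c d)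
        = F (Poly_Mapping.single a b) * Poly_Mapping.single c d + Poly_Mapping.single a b * F (Poly_Mapping.single c d)"
  shows "F (f * g) = F f * g + f * F g"
proof -
  have "F (f * g) - (F f * g + f * F g) = 0"
    by (rule biadditive_eq_0[where B = "\<lambda>f g. F (f * g) - (F f * g + f * F g)"])
       (simp_all add: add single algebra_simps)
  then show ?thesis by simp
qed

lemma multiplicative_from_singles:
  fixes F :: "('a::monoid_add \<Rightarrow>\<^sub>0 'b::comm_ring_1) \<Rightarrow> 'c::comm_ring_1"
  assumes add: "\<And>f g. F (f + g) = F f + F g"
    and single: "\<And>a b c d. F (Poly_Mapping.single a b * Poly_Mapping.single c d)
        = F (Poly_Mapping.single a b) * F (Poly_Mapping.single c d)"
  shows "F (f * g) = F f * F g"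
proof -
  have "F (f * g) - F f * F g = 0"
    by (rule biadditive_eq_0[where B = "\<lambda>f g. F (f * g) - F f * F g"])
       (simp_all add: add single algebra_simps)
  then show ?thesis by simp
qed

section \<open>Differential polynomials\<close>

lemma pC_add: "pC (a + b) = pC a + pC b" by (simp add: pC_def single_add)
lemma pC_mult: "pC (a * b) = pC a * pC b" by (simp add: pC_def mult_single)
lemma pC_0 [simp]: "pC 0 = 0" by (simp add: pC_def)
lemma pC_1 [simp]: "pC 1 = 1" by (simp add: pC_def)
lemma pC_uminus: "pC (- a) = - pC a" by (simp add: pC_def single_uminus)
lemma pC_diff: "pC (a - b) = pC a - pC b" by (simp add: pC_def single_diff)
lemma pC_of_nat: "pC (of_nat n) = of_nat n" by (simp add: pC_def)
lemma pC_sum: "pC (sum f S) = (\<Sum>x\<in>S. pC (f x))"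
  by (induction S rule: infinite_finite_induct) (auto simp: pC_add)

lemma lC_add: "lC (a + b) = lC a + lC b" by (simp add: lC_def single_add)
lemma lC_mult: "lC (a * b) = lC a * lC b" by (simp add: lC_def mult_single)
lemma lC_0 [simp]: "lC 0 = 0" by (simp add: lC_def)
lemma lC_1 [simp]: "lC 1 = 1" by (simp add: lC_def)
lemma lC_uminus: "lC (- a) = - lC a" by (simp add: lC_def single_uminus)
lemma lC_sum: "lC (sum f S) = (\<Sum>x\<in>S. lC (f x))"
  by (induction S rule: infinite_finite_induct) (auto simp: lC_add)

definition monom_poly :: "monom \<Rightarrow> dpoly" where
  "monom_poly \<mu> = Poly_Mapping.single \<mu> 1"

lemma single_eq_pC_monom_poly: "Poly_Mapping.single \<mu> b = pC b * monom_poly \<mu>"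
  by (simp add: pC_def monom_poly_def mult_single)

lemma monom_poly_add: "monom_poly (\<mu> + \<nu>) = monom_poly \<mu> * monom_poly \<nu>"
  by (simp add: monom_poly_def mult_single)

lemma monom_poly_0 [simp]: "monom_poly 0 = 1"
  by (simp add: monom_poly_def)

lemma monom_poly_single: "monom_poly (Poly_Mapping.single v b) = X v ^ b"
proof (induction b)
  case (Suc b)
  have "Poly_Mapping.single v (Suc b) = Poly_Mapping.single v 1 + Poly_Mapping.single v b"
    by (simp add: single_add[symmetric] Suc_eq_plus1_left)
  then have "monom_poly (Poly_Mapping.single v (Suc b))
      = monom_poly (Poly_Mapping.single v 1) * monom_poly (Poly_Mapping.single v b)"
    by (simp only: monom_poly_add)
  then show ?case using Suc by (simp add: X_def monom_poly_def)
qed simp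

definition monom_eval :: "(var \<Rightarrow> 'b::comm_ring_1) \<Rightarrow> monom \<Rightarrow> 'b" where
  "monom_eval \<sigma> \<mu> = (\<Prod>v\<in>Poly_Mapping.keys \<mu>. \<sigma> v ^ Poly_Mapping.lookup \<mu> v)"

lemma monom_eval_superset:
  assumes "finite S" "Poly_Mapping.keys \<mu> \<subseteq> S"
  shows "monom_eval \<sigma> \<mu> = (\<Prod>v\<in>S. \<sigma> v ^ Poly_Mapping.lookup \<mu> v)"
  unfolding monom_eval_def
  by (rule prod.mono_neutral_left) (use assms in \<open>auto simp: in_keys_iff\<close>)

lemma monom_eval_add: "monom_eval \<sigma> (\<mu> + \<nu>) = monom_eval \<sigma> \<mu> * monom_eval \<sigma> \<nu>"
proof -
  let ?S = "Poly_Mapping.keys \<mu> \<union> Poly_Mapping.keys \<nu> \<union> Poly_Mapping.keys (\<mu> + \<nu>)"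
  have "monom_eval \<sigma> (\<mu> + \<nu>) = (\<Prod>v\<in>?S. \<sigma> v ^ Poly_Mapping.lookup (\<mu> + \<nu>) v)"
    by (rule monom_eval_superset) auto
  also have "\<dots> = (\<Prod>v\<in>?S. \<sigma> v ^ Poly_Mapping.lookup \<mu> v) * (\<Prod>v\<in>?S. \<sigma> v ^ Poly_Mapping.lookup \<nu> v)"
    by (simp add: lookup_add power_add prod.distrib)
  also have "\<dots> = monom_eval \<sigma> \<mu> * monom_eval \<sigma> \<nu>"
    by (subst (1 2) monom_eval_superset[where S = ?S]) auto
  finally show ?thesis .
qed

lemma monom_eval_0 [simp]: "monom_eval \<sigma> 0 = 1"
  by (simp add: monom_eval_def)

lemma monom_eval_single_1: "monom_eval \<sigma> (Poly_Mapping.single v 1) = \<sigma> v"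
  by (simp add: monom_eval_def)

locale coeff_hom =
  fixes c :: "complex \<Rightarrow> 'b::comm_ring_1"
  assumes c_0: "c 0 = 0" and c_add: "c (a + b) = c a + c b" and c_mult: "c (a * b) = c a * c b"
begin

lemma peval_add: "peval c \<sigma> (P + Q) = peval c \<sigma> P + peval c \<sigma> Q"
proof -
  have "peval c \<sigma> P = sum_terms (\<lambda>\<mu> b. c b * monom_eval \<sigma> \<mu>) P" for P
    by (simp add: peval_def sum_terms_def monom_eval_def)
  then show ?thesis
    by (simp only:) (rule sum_terms_add; simp add: c_add c_0 distrib_right)
qed

lemma peval_0 [simp]: "peval c \<sigma> 0 = 0"
  by (simp add: peval_def)

lemma peval_single: "peval c \<sigma> (Poly_Mapping.single \<mu> b) = c b * monom_eval \<sigma> \<mu>"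
  by (cases "b = 0") (simp_all add: peval_def monom_eval_def c_0)

lemma peval_mult: "peval c \<sigma> (P * Q) = peval c \<sigma> P * peval c \<sigma> Q"
  by (rule multiplicative_from_singles)
     (simp_all add: peval_add peval_single mult_single c_mult monom_eval_add)

lemma peval_sum: "peval c \<sigma> (sum f S) = (\<Sum>x\<in>S. peval c \<sigma> (f x))"
  by (induction S rule: infinite_finite_induct) (auto simp: peval_add)

lemma peval_pC: "peval c \<sigma> (pC a) = c a"
  by (simp add: pC_def peval_single)

lemma peval_X: "peval c \<sigma> (X v) = c 1 * \<sigma> v"
  by (simp add: X_def peval_single monom_eval_single_1)

end

interpretation lC_pC: coeff_hom "\<lambda>c. lC (pC c)"
  by unfold_locales (auto simp: pC_add pC_mult lC_add lC_mult)

definition Dp_monom :: "monom \<Rightarrow> dpoly" where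
  "Dp_monom \<mu> = (\<Sum>v\<in>Poly_Mapping.keys \<mu>. of_nat (Poly_Mapping.lookup \<mu> v) * X (fst v, Suc (snd v)) *
      Poly_Mapping.single (\<mu> - Poly_Mapping.single v 1) 1)"

lemma Dp_monom_superset:
  assumes "finite S" "Poly_Mapping.keys \<mu> \<subseteq> S"
  shows "Dp_monom \<mu> = (\<Sum>v\<in>S. of_nat (Poly_Mapping.lookup \<mu> v) * X (fst v, Suc (snd v)) *
      Poly_Mapping.single (\<mu> - Poly_Mapping.single v 1) 1)"
  unfolding Dp_monom_def
  by (rule sum.mono_neutral_left) (use assms in \<open>auto simp: in_keys_iff\<close>)

lemma monom_diff_single_add:
  "Poly_Mapping.lookup \<mu> v \<noteq> 0 \<Longrightarrow>
    \<mu> + \<nu> - Poly_Mapping.single v 1 = (\<mu> - Poly_Mapping.single v 1) + (\<nu> :: monom)"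
  by (intro poly_mapping_eqI) (auto simp: lookup_add lookup_minus lookup_single when_def)

lemma monom_poly_partial_add:
  fixes \<mu> \<nu> :: monom and v :: var
  defines "dv \<equiv> \<lambda>\<mu>. of_nat (Poly_Mapping.lookup \<mu> v) * monom_poly (\<mu> - Poly_Mapping.single v 1)"
  shows "dv (\<mu> + \<nu>) = dv \<mu> * monom_poly \<nu> + monom_poly \<mu> * dv \<nu>"
proof -
  have "of_nat (Poly_Mapping.lookup \<mu> v) * monom_poly (\<mu> + \<nu> - Poly_Mapping.single v 1)
      = of_nat (Poly_Mapping.lookup \<mu> v) * monom_poly (\<mu> - Poly_Mapping.single v 1) * monom_poly \<nu>"
    by (cases "Poly_Mapping.lookup \<mu> v = 0") (simp_all add: monom_diff_single_add monom_poly_add)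
  moreover have "of_nat (Poly_Mapping.lookup \<nu> v) * monom_poly (\<mu> + \<nu> - Poly_Mapping.single v 1)
      = monom_poly \<mu> * (of_nat (Poly_Mapping.lookup \<nu> v) * monom_poly (\<nu> - Poly_Mapping.single v 1))"
    by (cases "Poly_Mapping.lookup \<nu> v = 0")
       (simp_all add: add.commute[of \<mu> \<nu>] monom_diff_single_add monom_poly_add mult_ac)
  ultimately show ?thesis
    by (simp add: dv_def lookup_add distrib_right)
qed

lemma Dp_monom_add: "Dp_monom (\<mu> + \<nu>) = Dp_monom \<mu> * monom_poly \<nu> + monom_poly \<mu> * Dp_monom \<nu>"
proof -
  let ?S = "Poly_Mapping.keys \<mu> \<union> Poly_Mapping.keys \<nu> \<union> Poly_Mapping.keys (\<mu> + \<nu>)"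
  let ?t = "\<lambda>\<mu> v. X (fst v, Suc (snd v)) *
    (of_nat (Poly_Mapping.lookup \<mu> v) * monom_poly (\<mu> - Poly_Mapping.single v 1))"
  have "Dp_monom \<kappa> = (\<Sum>v\<in>?S. ?t \<kappa> v)" if "Poly_Mapping.keys \<kappa> \<subseteq> ?S" for \<kappa>
    by (subst Dp_monom_superset[OF _ that]) (auto simp: monom_poly_def algebra_simps)
  then have eqs: "Dp_monom (\<mu> + \<nu>) = (\<Sum>v\<in>?S. ?t (\<mu> + \<nu>) v)"
    "Dp_monom \<mu> = (\<Sum>v\<in>?S. ?t \<mu> v)" "Dp_monom \<nu> = (\<Sum>v\<in>?S. ?t \<nu> v)"
    by auto
  have "?t (\<mu> + \<nu>) v = ?t \<mu> v * monom_poly \<nu> + monom_poly \<mu> * ?t \<nu> v" for v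
    by (simp only: monom_poly_partial_add) (simp add: algebra_simps)
  then show ?thesis
    by (simp only: eqs sum.distrib sum_distrib_left sum_distrib_right)
qed

lemma Dp_add: "Dp (P + Q) = Dp P + Dp Q"
proof -
  have "Dp P = sum_terms (\<lambda>\<mu> b. pC b * Dp_monom \<mu>) P" for P
    by (simp add: Dp_def sum_terms_def Dp_monom_def)
  then show ?thesis
    by (simp only:) (rule sum_terms_add; simp add: pC_add distrib_right)
qed

lemma Dp_single: "Dp (Poly_Mapping.single \<mu> b) = pC b * Dp_monom \<mu>"
  by (cases "b = 0") (simp_all add: Dp_def Dp_monom_def)

lemma Dp_mult: "Dp (P * Q) = Dp P * Q + P * Dp Q"
proof (rule derivation_from_singles)
  fix a b c d
  have "Dp (Poly_Mapping.single a b * Poly_Mapping.single c d) = pC (b * d) * Dp_monom (a + c)"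
    by (simp add: mult_single Dp_single)
  also have "\<dots> = Dp (Poly_Mapping.single a b) * Poly_Mapping.single c d
      + Poly_Mapping.single a b * Dp (Poly_Mapping.single c d)"
    unfolding Dp_single by (simp add: single_eq_pC_monom_poly Dp_monom_add pC_mult algebra_simps)
  finally show "Dp (Poly_Mapping.single a b * Poly_Mapping.single c d) = \<dots>" .
qed (rule Dp_add)

lemma Dp_0 [simp]: "Dp 0 = 0"
  by (simp add: Dp_def)

lemma Dp_uminus: "Dp (- P) = - Dp P"
  using Dp_add[of P "- P"] by (simp add: eq_neg_iff_add_eq_0 add.commute)

lemma Dp_sum: "Dp (sum f S) = (\<Sum>x\<in>S. Dp (f x))"
  by (induction S rule: infinite_finite_induct) (auto simp: Dp_add)

lemma Dp_pC [simp]: "Dp (pC c) = 0"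
  by (simp add: pC_def Dp_single Dp_monom_def)

lemma Dp_1 [simp]: "Dp 1 = 0"
  using Dp_pC[of 1] by simp

lemma Dp_pC_mult: "Dp (pC c * P) = pC c * Dp P"
  by (simp add: Dp_mult)

lemma Dp_X: "Dp (X (j, m)) = X (j, Suc m)"
  by (simp add: X_def Dp_single Dp_monom_def)

lemma Dp_cur: "Dp (cur N v m) = cur N v (Suc m)"
  by (simp add: cur_def Dp_sum Dp_pC_mult Dp_X)

section \<open>Laurent polynomials in \<open>u = z - w\<close>\<close>

definition Dcoeff :: "lpoly \<Rightarrow> lpoly" where
  "Dcoeff L = sum_terms (\<lambda>s p. Poly_Mapping.single s (Dp p)) L"

definition Du :: "lpoly \<Rightarrow> lpoly" where
  "Du L = sum_terms (\<lambda>s p. Poly_Mapping.single (s - 1) (pC (of_int s) * p)) L"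

text \<open>Since \<open>u = z - w\<close>, the derivative in \<open>w\<close> at fixed \<open>z\<close> is \<open>Dcoeff - Du\<close>.\<close>

definition Dw :: "lpoly \<Rightarrow> lpoly" where
  "Dw L = Dcoeff L - Du L"

lemma Dcoeff_add: "Dcoeff (L + M) = Dcoeff L + Dcoeff M"
  unfolding Dcoeff_def by (rule sum_terms_add) (auto simp: Dp_add single_add)

lemma Dcoeff_single: "Dcoeff (Poly_Mapping.single s p) = Poly_Mapping.single s (Dp p)"
  unfolding Dcoeff_def by (rule sum_terms_single) simp

lemma Du_add: "Du (L + M) = Du L + Du M"
  unfolding Du_def by (rule sum_terms_add) (auto simp: distrib_left single_add)

lemma Du_single: "Du (Poly_Mapping.single s p) = Poly_Mapping.single (s - 1) (pC (of_int s) * p)"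
  unfolding Du_def by (rule sum_terms_single) simp

lemma Dcoeff_mult: "Dcoeff (L * M) = Dcoeff L * M + L * Dcoeff M"
  by (rule derivation_from_singles) (auto simp: Dcoeff_add Dcoeff_single mult_single Dp_mult single_add)

lemma Du_mult: "Du (L * M) = Du L * M + L * Du M"
  by (rule derivation_from_singles)
     (simp_all add: Du_add Du_single mult_single single_add[symmetric] pC_add algebra_simps)

lemma Dcoeff_0 [simp]: "Dcoeff 0 = 0"
  by (simp add: Dcoeff_def)

lemma Du_0 [simp]: "Du 0 = 0"
  by (simp add: Du_def)

lemma Dcoeff_sum: "Dcoeff (sum f S) = (\<Sum>x\<in>S. Dcoeff (f x))"
  by (induction S rule: infinite_finite_induct) (auto simp: Dcoeff_add)

lemma Du_sum: "Du (sum f S) = (\<Sum>x\<in>S. Du (f x))"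
  by (induction S rule: infinite_finite_induct) (auto simp: Du_add)

lemma lookup_Dcoeff: "Poly_Mapping.lookup (Dcoeff L) s = Dp (Poly_Mapping.lookup L s)"
  by (rule additive_eqI[where F = "\<lambda>L. Poly_Mapping.lookup (Dcoeff L) s"])
     (auto simp: Dcoeff_add lookup_add Dp_add Dcoeff_single lookup_single when_def)

lemma lookup_Du: "Poly_Mapping.lookup (Du L) s = pC (of_int (s + 1)) * Poly_Mapping.lookup L (s + 1)"
  by (rule additive_eqI[where F = "\<lambda>L. Poly_Mapping.lookup (Du L) s"])
     (auto simp: Du_add lookup_add distrib_left Du_single lookup_single when_def)

lemma Dw_add: "Dw (L + M) = Dw L + Dw M"
  by (simp add: Dw_def Dcoeff_add Du_add)

lemma Dw_diff: "Dw (L - M) = Dw L - Dw M"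
  using Dw_add[of "L - M" M] by simp

lemma Dw_mult: "Dw (L * M) = Dw L * M + L * Dw M"
  by (simp add: Dw_def Dcoeff_mult Du_mult algebra_simps)

lemma Dw_0 [simp]: "Dw 0 = 0"
  by (simp add: Dw_def)

lemma Dw_sum: "Dw (sum f S) = (\<Sum>x\<in>S. Dw (f x))"
  by (induction S rule: infinite_finite_induct) (auto simp: Dw_add)

lemma Dw_lC: "Dw (lC p) = lC (Dp p)"
  by (simp add: Dw_def lC_def Dcoeff_single Du_single)

lemma Dw_1 [simp]: "Dw 1 = 0"
  using Dw_lC[of 1] by simp

lemma Dw_lC_mult: "Dw (lC (pC c) * L) = lC (pC c) * Dw L"
  by (simp add: Dw_mult Dw_lC)

lemma Dw_U: "Dw (U d) = - (lC (pC (of_int d)) * U (d - 1))"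
  by (simp add: Dw_def U_def lC_def Dcoeff_single Du_single mult_single)

lemma lookup_Dw:
  "Poly_Mapping.lookup (Dw L) s = Dp (Poly_Mapping.lookup L s) - pC (of_int (s + 1)) * Poly_Mapping.lookup L (s + 1)"
  by (simp add: Dw_def lookup_minus lookup_Dcoeff lookup_Du)

lemma U_mult: "U a * U b = U (a + b)"
  by (simp add: U_def mult_single)

lemma lC_mult_U: "lC p * U m = Poly_Mapping.single m p"
  by (simp add: lC_def U_def mult_single)

lemma lookup_single_mult:
  "Poly_Mapping.lookup (Poly_Mapping.single a b * M) t = b * Poly_Mapping.lookup M (t - a)"
  for M :: lpoly
  by (rule additive_eqI[where F = "\<lambda>M. Poly_Mapping.lookup (Poly_Mapping.single a b * M) t"])
     (auto simp: distrib_left lookup_add mult_single lookup_single when_def)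

lemma lookup_lC_mult: "Poly_Mapping.lookup (lC p * L) t = p * Poly_Mapping.lookup L t"
  using lookup_single_mult[of 0 p L t] by (simp add: lC_def)

definition conv_coeff :: "lpoly \<Rightarrow> (int \<Rightarrow> dpoly) \<Rightarrow> int \<Rightarrow> dpoly" where
  "conv_coeff L S t = sum_terms (\<lambda>s p. p * S (t - s)) L"

lemma conv_coeff_add: "conv_coeff (L + M) S t = conv_coeff L S t + conv_coeff M S t"
  unfolding conv_coeff_def by (rule sum_terms_add) (auto simp: distrib_right)

lemma conv_coeff_single: "conv_coeff (Poly_Mapping.single s p) S t = p * S (t - s)"
  unfolding conv_coeff_def by (rule sum_terms_single) simp

lemma conv_coeff_diff: "conv_coeff (L - M) S t = conv_coeff L S t - conv_coeff M S t"
  using conv_coeff_add[of "L - M" M] by (simp add: algebra_simps)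

lemma conv_coeff_mult_single: "conv_coeff (L * Poly_Mapping.single e q) S t = q * conv_coeff L S (t - e)"
  by (rule additive_eqI[where F = "\<lambda>L. conv_coeff (L * Poly_Mapping.single e q) S t"])
     (auto simp: distrib_right distrib_left conv_coeff_add conv_coeff_single mult_single algebra_simps)

lemma conv_coeff_lC_mult: "conv_coeff (lC q * L) S t = q * conv_coeff L S t"
  using conv_coeff_mult_single[of L 0 q S t] by (simp add: lC_def mult.commute)

lemma conv_coeff_U_mult: "conv_coeff (U e * L) S t = conv_coeff L S (t - e)"
  using conv_coeff_mult_single[of L e 1 S t] by (simp add: U_def mult.commute)

lemma conv_coeff_seq_add: "conv_coeff L (\<lambda>r. S1 r + S2 r) t = conv_coeff L S1 t + conv_coeff L S2 t"
  by (rule additive_eqI[where F = "\<lambda>L. conv_coeff L (\<lambda>r. S1 r + S2 r) t"])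
     (auto simp: conv_coeff_add conv_coeff_single algebra_simps)

lemma conv_coeff_seq_diff: "conv_coeff L (\<lambda>r. S1 r - S2 r) t = conv_coeff L S1 t - conv_coeff L S2 t"
  by (rule additive_eqI[where F = "\<lambda>L. conv_coeff L (\<lambda>r. S1 r - S2 r) t"])
     (auto simp: conv_coeff_add conv_coeff_single algebra_simps)

lemma conv_coeff_seq_scale: "conv_coeff L (\<lambda>r. c * S r) t = c * conv_coeff L S t"
  by (rule additive_eqI[where F = "\<lambda>L. conv_coeff L (\<lambda>r. c * S r) t"])
     (auto simp: conv_coeff_add conv_coeff_single algebra_simps)

lemma conv_coeff_shift: "conv_coeff L S (t + 1) = conv_coeff L (\<lambda>r. S (r + 1)) t"
  by (rule additive_eqI[where F = "\<lambda>L. conv_coeff L S (t + 1)"])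
     (auto simp: conv_coeff_add conv_coeff_single algebra_simps)

lemma Dp_conv_coeff:
  "Dp (conv_coeff L S t) = conv_coeff (Dcoeff L) S t + conv_coeff L (\<lambda>r. Dp (S r)) t"
  by (rule additive_eqI[where F = "\<lambda>L. Dp (conv_coeff L S t)"])
     (auto simp: conv_coeff_add Dp_add Dcoeff_add conv_coeff_single Dcoeff_single Dp_mult algebra_simps)

lemma conv_coeff_Du:
  "conv_coeff (Du L) S t = conv_coeff L (\<lambda>r. pC (of_int (t + 1 - r)) * S r) (t + 1)"
  by (rule additive_eqI[where F = "\<lambda>L. conv_coeff (Du L) S t"])
     (auto simp: conv_coeff_add Du_add conv_coeff_single Du_single algebra_simps)

definition ord_ge :: "lpoly \<Rightarrow> int \<Rightarrow> bool" where
  "ord_ge L a \<longleftrightarrow> (\<forall>s\<in>Poly_Mapping.keys L. a \<le> s)"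

lemma ord_ge_mult: "ord_ge L a \<Longrightarrow> ord_ge M b \<Longrightarrow> ord_ge (L * M) (a + b)"
  unfolding ord_ge_def using keys_mult[of L M] by fastforce

lemma ord_ge_add: "ord_ge L a \<Longrightarrow> ord_ge M a \<Longrightarrow> ord_ge (L + M) a"
  unfolding ord_ge_def using keys_add[of L M] by fastforce

lemma ord_ge_sum: "(\<And>x. x \<in> S \<Longrightarrow> ord_ge (f x) a) \<Longrightarrow> ord_ge (sum f S) a"
  by (induction S rule: infinite_finite_induct) (auto simp: ord_ge_add, auto simp: ord_ge_def)

lemma ord_ge_single: "a \<le> s \<Longrightarrow> ord_ge (Poly_Mapping.single s p) a"
  by (simp add: ord_ge_def)

lemma ord_ge_mono: "ord_ge L a \<Longrightarrow> b \<le> a \<Longrightarrow> ord_ge L b"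
  by (auto simp: ord_ge_def)

lemma ord_ge_power: "ord_ge L a \<Longrightarrow> ord_ge (L ^ q) (int q * a)"
proof (induction q)
  case 0
  show ?case by (simp add: ord_ge_def)
next
  case (Suc q)
  have "ord_ge (L * L ^ q) (a + int q * a)" by (rule ord_ge_mult) (use Suc in auto)
  then show ?case by (simp add: algebra_simps)
qed

lemma ord_ge_lookup: "ord_ge L a \<Longrightarrow> t < a \<Longrightarrow> Poly_Mapping.lookup L t = 0"
  unfolding ord_ge_def by (metis in_keys_iff not_le)

lemma ord_ge_lC_mult: "ord_ge L a \<Longrightarrow> ord_ge (lC p * L) a"
  using ord_ge_mult[of "lC p" 0 L a] by (simp add: lC_def ord_ge_single)

section \<open>Schur polynomials\<close>

lemma Tser_eq: "Tser N \<alpha> R = (\<Sum>m\<in>{1..R}. Poly_Mapping.single (int m) (pC (1 / fact m) * cur N \<alpha> m))"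
  by (simp add: Tser_def lC_mult_U)

lemma ord_ge_Tser: "ord_ge (Tser N \<alpha> R) 1"
  unfolding Tser_eq by (rule ord_ge_sum) (auto intro: ord_ge_single)

lemma ord_ge_Tser_power: "ord_ge (Tser N \<alpha> R ^ q) (int q)"
  using ord_ge_power[OF ord_ge_Tser, of N \<alpha> R q] by simp

lemma ord_ge_Tser_power_0: "ord_ge (Tser N \<alpha> R ^ q) 0"
  by (rule ord_ge_mono[OF ord_ge_Tser_power]) simp

lemma ord_ge_power_perturb:
  assumes "ord_ge B 0" "ord_ge H c" "0 \<le> c"
  shows "ord_ge ((B + H) ^ q - B ^ q) c"
proof (induction q)
  case 0
  show ?case by (simp add: ord_ge_def)
next
  case (Suc q)
  have BH: "ord_ge (B + H) 0"
    using assms by (intro ord_ge_add) (auto intro: ord_ge_mono)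
  have "(B + H) ^ Suc q - B ^ Suc q = (B + H) * ((B + H) ^ q - B ^ q) + H * B ^ q"
    by (simp add: algebra_simps)
  moreover have "ord_ge ((B + H) * ((B + H) ^ q - B ^ q)) c"
    using ord_ge_mult[OF BH Suc] by simp
  moreover have "ord_ge (H * B ^ q) c"
    using ord_ge_mult[OF assms(2) ord_ge_power[OF assms(1)]] by simp
  ultimately show ?case by (simp add: ord_ge_add)
qed

lemma lookup_Tser_power_trunc:
  assumes "r \<le> R"
  shows "Poly_Mapping.lookup (Tser N \<alpha> R ^ q) (int r) = Poly_Mapping.lookup (Tser N \<alpha> r ^ q) (int r)"
proof -
  define H where "H = (\<Sum>m\<in>{r+1..R}. Poly_Mapping.single (int m) (pC (1 / fact m) * cur N \<alpha> m))"
  have "{1..R} = {1..r} \<union> {r+1..R}" using assms by auto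
  then have "Tser N \<alpha> R = Tser N \<alpha> r + H"
    unfolding Tser_eq H_def by (subst sum.union_disjoint[symmetric]) auto
  moreover have "ord_ge H (int r + 1)"
    unfolding H_def by (rule ord_ge_sum) (auto intro: ord_ge_single)
  ultimately have "ord_ge (Tser N \<alpha> R ^ q - Tser N \<alpha> r ^ q) (int r + 1)"
    using ord_ge_power_perturb[OF ord_ge_mono[OF ord_ge_Tser]] by simp
  then have "Poly_Mapping.lookup (Tser N \<alpha> R ^ q - Tser N \<alpha> r ^ q) (int r) = 0"
    by (rule ord_ge_lookup) simp
  then show ?thesis by (simp add: lookup_minus)
qed

definition exp_Tser :: "nat \<Rightarrow> vec \<Rightarrow> nat \<Rightarrow> nat \<Rightarrow> lpoly" where
  "exp_Tser N \<alpha> R Q = (\<Sum>q\<le>Q. lC (pC (1 / fact q)) * Tser N \<alpha> R ^ q)"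

lemma lookup_exp_Tser:
  assumes "r \<le> R" "r \<le> Q"
  shows "Poly_Mapping.lookup (exp_Tser N \<alpha> R Q) (int r) = Sch N \<alpha> r"
proof -
  have "Poly_Mapping.lookup (exp_Tser N \<alpha> R Q) (int r)
      = (\<Sum>q\<le>Q. pC (1 / fact q) * Poly_Mapping.lookup (Tser N \<alpha> r ^ q) (int r))"
    by (simp add: exp_Tser_def lookup_sum lookup_lC_mult lookup_Tser_power_trunc[OF assms(1)])
  also have "\<dots> = (\<Sum>q\<le>r. pC (1 / fact q) * Poly_Mapping.lookup (Tser N \<alpha> r ^ q) (int r))"
    by (rule sum.mono_neutral_right)
       (use assms ord_ge_lookup[OF ord_ge_Tser_power] in \<open>auto simp: not_le\<close>)
  finally show ?thesis by (simp add: Sch_def)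
qed

lemma ord_ge_exp_Tser: "ord_ge (exp_Tser N \<alpha> R Q) 0"
  unfolding exp_Tser_def by (rule ord_ge_sum) (auto intro: ord_ge_lC_mult ord_ge_Tser_power_0)

lemma Dw_power: "Dw (L ^ Suc q) = lC (of_nat (Suc q)) * L ^ q * Dw L"
proof (induction q)
  case (Suc q)
  have "lC (of_nat (Suc (Suc q))) = 1 + lC (of_nat (Suc q))"
    by (simp add: lC_def single_one[symmetric] single_add[symmetric] del: single_one)
  with Suc show ?case
    by (simp only: power_Suc[of L "Suc q"] Dw_mult) (simp add: algebra_simps)
qed simp

text \<open>Only the top term of \<open>T\<close> survives besides \<open>-(\<alpha>, \<partial>\<phi>)\<close>: the \<open>w\<close>-derivative of
  \<open>(\<alpha>, \<partial>\<^sup>m\<phi>) u\<^sup>m / m!\<close> cancels the \<open>u\<close>-derivative of the next term.\<close>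

lemma Dw_Tser:
  "Dw (Tser N \<alpha> R) = Poly_Mapping.single (int R) (pC (1 / fact R) * cur N \<alpha> (Suc R)) - lC (cur N \<alpha> 1)"
proof -
  define f where "f m = Poly_Mapping.single (int m) (pC (1 / fact m) * cur N \<alpha> (Suc m))" for m
  define g where "g m = Poly_Mapping.single (int m - 1) (pC (of_int (int m)) * (pC (1 / fact m) * cur N \<alpha> m))"
    for m
  have "Dcoeff (Tser N \<alpha> R) = (\<Sum>m\<in>{1..R}. f m)"
    by (simp add: Tser_eq Dcoeff_sum Dcoeff_single Dp_pC_mult Dp_cur f_def)
  also have "\<dots> = (\<Sum>m<R. f (Suc m))"
    by (rule sum_bounds_lt_plus1[symmetric])
  finally have "Dcoeff (Tser N \<alpha> R) = (\<Sum>m<R. f (Suc m))" .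
  moreover have "Du (Tser N \<alpha> R) = (\<Sum>m<R. f m)"
  proof -
    have "Du (Tser N \<alpha> R) = (\<Sum>m\<in>{1..R}. g m)"
      by (simp add: Tser_eq Du_sum Du_single g_def)
    also have "\<dots> = (\<Sum>m<R. g (Suc m))"
      by (rule sum_bounds_lt_plus1[symmetric])
    also have "\<dots> = (\<Sum>m<R. f m)"
      by (simp add: f_def g_def mult.assoc[symmetric] pC_mult[symmetric] fact_Suc[of m for m] del: of_nat_Suc) simp
    finally show ?thesis .
  qed
  ultimately have "Dw (Tser N \<alpha> R) = f R - f 0"
    by (simp add: Dw_def sum_subtractf[symmetric] sum_lessThan_telescope)
  then show ?thesis by (simp add: f_def lC_def One_nat_def)
qed

lemma Dw_exp_Tser: "Dw (exp_Tser N \<alpha> R (Suc Q)) = exp_Tser N \<alpha> R Q * Dw (Tser N \<alpha> R)"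
proof -
  let ?T = "Tser N \<alpha> R"
  have step: "lC (pC (1 / fact (Suc q))) * Dw (?T ^ Suc q) = lC (pC (1 / fact q)) * ?T ^ q * Dw ?T" for q
  proof -
    have "lC (pC (1 / fact (Suc q))) * lC (of_nat (Suc q)) = lC (pC (1 / fact q))"
      by (simp add: lC_mult[symmetric] pC_of_nat[symmetric] pC_mult[symmetric] fact_Suc del: of_nat_Suc)
    then show ?thesis by (simp only: Dw_power mult.assoc[symmetric])
  qed
  have "Dw (exp_Tser N \<alpha> R (Suc Q)) = (\<Sum>q\<le>Suc Q. lC (pC (1 / fact q)) * Dw (?T ^ q))"
    by (simp only: exp_Tser_def Dw_sum Dw_lC_mult)
  also have "\<dots> = lC (pC (1 / fact 0)) * Dw (?T ^ 0)
      + (\<Sum>q\<le>Q. lC (pC (1 / fact (Suc q))) * Dw (?T ^ Suc q))"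
    by (rule sum.atMost_Suc_shift)
  also have "\<dots> = (\<Sum>q\<le>Q. lC (pC (1 / fact q)) * ?T ^ q * Dw ?T)"
    by (simp only: power_0 Dw_1 mult_zero_right add_0 step)
  also have "\<dots> = exp_Tser N \<alpha> R Q * Dw ?T"
    by (simp add: exp_Tser_def sum_distrib_right)
  finally show ?thesis .
qed

text \<open>Comparing the coefficients of \<open>u\<^sup>r\<close> in \<open>Dw (exp T) = exp T \<cdot> Dw T\<close>.\<close>

lemma Sch_recursion:
  "pC (of_nat (Suc r)) * Sch N \<alpha> (Suc r) = Dp (Sch N \<alpha> r) + cur N \<alpha> 1 * Sch N \<alpha> r"
proof -
  define R where "R = r + 2"
  let ?E = "exp_Tser N \<alpha> R (Suc r)"
  let ?top = "Poly_Mapping.single (int R) (pC (1 / fact R) * cur N \<alpha> (Suc R))"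
  have S: "Poly_Mapping.lookup ?E (int r) = Sch N \<alpha> r"
    "Poly_Mapping.lookup (exp_Tser N \<alpha> R (Suc (Suc r))) (int r) = Sch N \<alpha> r"
    "Poly_Mapping.lookup (exp_Tser N \<alpha> R (Suc (Suc r))) (int (Suc r)) = Sch N \<alpha> (Suc r)"
    by (rule lookup_exp_Tser; simp add: R_def)+
  have "Poly_Mapping.lookup (?E * ?top) (int r) = 0"
    by (rule ord_ge_lookup[OF ord_ge_mult[OF ord_ge_exp_Tser ord_ge_single]]) (auto simp: R_def)
  then have "Poly_Mapping.lookup (Dw (exp_Tser N \<alpha> R (Suc (Suc r)))) (int r) = - (cur N \<alpha> 1 * Sch N \<alpha> r)"
    by (simp add: Dw_exp_Tser Dw_Tser right_diff_distrib lookup_minus mult.commute[of ?E]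
        lookup_lC_mult S(1))
  then show ?thesis
    using S(2,3) by (simp add: lookup_Dw algebra_simps)
qed

definition Sch_int :: "nat \<Rightarrow> vec \<Rightarrow> int \<Rightarrow> dpoly" where
  "Sch_int N \<alpha> t = (if 0 \<le> t then Sch N \<alpha> (nat t) else 0)"

lemma Sch_int_recursion:
  "pC (of_int (t + 1)) * Sch_int N \<alpha> (t + 1) = Dp (Sch_int N \<alpha> t) + cur N \<alpha> 1 * Sch_int N \<alpha> t"
proof (cases "0 \<le> t")
  case True
  then obtain r where "t = int r" by (metis nonneg_int_cases)
  then show ?thesis
    using Sch_recursion[of r N \<alpha>]
    by (simp add: Sch_int_def nat_add_distrib pC_of_nat[symmetric] add.commute)
next
  case False
  then show ?thesis by (cases "t = -1") (simp_all add: Sch_int_def)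
qed

lemma Sch_int_neg: "t < 0 \<Longrightarrow> Sch_int N \<alpha> t = 0"
  by (simp add: Sch_int_def)

lemma Sch_int_0: "Sch_int N \<alpha> 0 = 1"
  by (simp add: Sch_int_def Sch_def)

lemma Sch_int_1: "Sch_int N \<alpha> 1 = cur N \<alpha> 1"
proof -
  have "{..1::nat} = {0, 1}" by auto
  then show ?thesis
    by (simp add: Sch_int_def Sch_def Tser_eq lookup_single lookup_one One_nat_def)
qed

section \<open>Operator product expansion with a screening current\<close>

definition deriv_only :: "dpoly \<Rightarrow> bool" where
  "deriv_only P \<longleftrightarrow> (\<forall>\<mu>\<in>Poly_Mapping.keys P. \<forall>v\<in>Poly_Mapping.keys \<mu>. 1 \<le> snd v)"

lemma deriv_only_0 [simp]: "deriv_only 0"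
  by (simp add: deriv_only_def)

lemma deriv_only_add: "deriv_only P \<Longrightarrow> deriv_only Q \<Longrightarrow> deriv_only (P + Q)"
  unfolding deriv_only_def using keys_add[of P Q] by blast

lemma deriv_only_mult:
  assumes "deriv_only P" "deriv_only Q"
  shows "deriv_only (P * Q)"
  unfolding deriv_only_def
proof (intro ballI)
  fix \<mu> v assume "\<mu> \<in> Poly_Mapping.keys (P * Q)" "v \<in> Poly_Mapping.keys \<mu>"
  moreover obtain x y where "\<mu> = x + y" "x \<in> Poly_Mapping.keys P" "y \<in> Poly_Mapping.keys Q"
    using keys_mult[of P Q] \<open>\<mu> \<in> Poly_Mapping.keys (P * Q)\<close> by blast
  ultimately show "1 \<le> snd v"
    using assms keys_add[of x y] by (auto simp: deriv_only_def)
qed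

lemma deriv_only_sum: "(\<And>x. x \<in> S \<Longrightarrow> deriv_only (f x)) \<Longrightarrow> deriv_only (sum f S)"
  by (induction S rule: infinite_finite_induct) (auto intro: deriv_only_add)

lemma deriv_only_pC: "deriv_only (pC c)"
  by (simp add: deriv_only_def pC_def)

lemma deriv_only_X: "1 \<le> m \<Longrightarrow> deriv_only (X (j, m))"
  by (simp add: X_def deriv_only_def)

lemma deriv_only_cur: "1 \<le> m \<Longrightarrow> deriv_only (cur N v m)"
  unfolding cur_def by (auto intro!: deriv_only_sum deriv_only_mult deriv_only_pC deriv_only_X)

lemma deriv_only_Dp:
  assumes "deriv_only P"
  shows "deriv_only (Dp P)"
  unfolding Dp_def
proof (intro deriv_only_sum deriv_only_mult deriv_only_pC)
  fix \<mu> v assume "\<mu> \<in> Poly_Mapping.keys P" "v \<in> Poly_Mapping.keys \<mu>"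
  then show "deriv_only (Poly_Mapping.single (\<mu> - Poly_Mapping.single v 1) 1)"
    using assms by (auto simp: deriv_only_def in_keys_iff lookup_minus)
qed (simp_all add: deriv_only_X deriv_only_pC[of "of_nat _", unfolded pC_of_nat])

definition contract :: "vec \<Rightarrow> dpoly \<Rightarrow> lpoly" where
  "contract \<alpha> P = peval (\<lambda>c. lC (pC c)) (contr_subst \<alpha>) P"

lemma Lsing_eq_contract: "Lsing \<alpha> P d = U d * contract \<alpha> P"
  by (simp add: Lsing_def contract_def)

lemma contract_0 [simp]: "contract \<alpha> 0 = 0"
  by (simp add: contract_def)

lemma contract_add: "contract \<alpha> (P + Q) = contract \<alpha> P + contract \<alpha> Q"
  by (simp add: contract_def lC_pC.peval_add)

lemma contract_mult: "contract \<alpha> (P * Q) = contract \<alpha> P * contract \<alpha> Q"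
  by (simp add: contract_def lC_pC.peval_mult)

lemma contract_pC: "contract \<alpha> (pC c) = lC (pC c)"
  by (simp add: contract_def lC_pC.peval_pC)

lemma contract_sum: "contract \<alpha> (sum f S) = (\<Sum>x\<in>S. contract \<alpha> (f x))"
  by (simp add: contract_def lC_pC.peval_sum)

lemma contract_X: "contract \<alpha> (X v) = contr_subst \<alpha> v"
  by (simp add: contract_def lC_pC.peval_X)

lemma contract_cur:
  "contract \<alpha> (cur N v 1) = lC (cur N v 1) - lC (pC (ip N \<alpha> v)) * U (- 1)"
proof -
  have "contract \<alpha> (cur N v 1) = (\<Sum>j<N. lC (pC (v j)) * (lC (X (j, 1)) - lC (pC (\<alpha> j)) * U (- 1)))"
    by (simp add: cur_def contract_sum contract_mult contract_pC contract_X contr_subst_def)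
  also have "\<dots> = lC (\<Sum>j<N. pC (v j) * X (j, 1)) - lC (pC (\<Sum>j<N. \<alpha> j * v j)) * U (- 1)"
    by (simp add: lC_sum pC_sum lC_mult pC_mult sum_subtractf sum_distrib_left algebra_simps)
  finally show ?thesis by (simp add: cur_def ip_def)
qed

lemma contract_Dp_X:
  assumes "1 \<le> m"
  shows "contract \<alpha> (Dp (X (j, m))) = Dw (contract \<alpha> (X (j, m)))"
proof -
  have "(fact m :: complex) = of_nat m * fact (m - 1)"
    using assms fact_Suc[of "m - 1"] by (simp add: One_nat_def)
  then have "lC (pC (\<alpha> j * fact (m - 1))) * lC (pC (of_int (- int m))) = - lC (pC (\<alpha> j * fact m))"
    by (simp add: lC_mult[symmetric] pC_mult[symmetric] lC_uminus[symmetric] pC_uminus[symmetric] mult_ac)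
  moreover have "- int m - 1 = - int (Suc m)" by simp
  ultimately have "lC (pC (\<alpha> j * fact (m - 1))) * Dw (U (- int m)) = lC (pC (\<alpha> j * fact m)) * U (- int (Suc m))"
    by (simp only: Dw_U mult_minus_right mult.assoc[symmetric]) simp
  then show ?thesis
    by (simp add: contract_X contr_subst_def Dp_X Dw_diff Dw_mult Dw_lC)
qed

lemma monom_poly_eq_prod: "monom_poly \<mu> = (\<Prod>v\<in>Poly_Mapping.keys \<mu>. X v ^ Poly_Mapping.lookup \<mu> v)"
proof -
  have "monom_poly \<mu> = monom_eval X \<mu>"
  proof (induction \<mu> rule: poly_mapping_induct)
    case (single v b)
    show ?case by (cases "b = 0") (simp_all add: monom_poly_single monom_eval_def)
  qed (simp_all add: monom_poly_add monom_eval_add)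
  then show ?thesis by (simp add: monom_eval_def)
qed

lemma contract_Dp_mult:
  assumes "contract \<alpha> (Dp P) = Dw (contract \<alpha> P)" "contract \<alpha> (Dp Q) = Dw (contract \<alpha> Q)"
  shows "contract \<alpha> (Dp (P * Q)) = Dw (contract \<alpha> (P * Q))"
  using assms by (simp add: Dp_mult contract_add contract_mult Dw_mult)

text \<open>Contraction intertwines \<open>\<partial>\<close> with \<open>Dw\<close> only on polynomials in derivatives of \<open>\<phi>\<close>:
  the contraction of \<open>\<phi>\<close> itself would be a logarithm.\<close>

lemma contract_Dp:
  assumes "deriv_only P"
  shows "contract \<alpha> (Dp P) = Dw (contract \<alpha> P)"
proof -
  have X_pow: "contract \<alpha> (Dp (X v ^ b)) = Dw (contract \<alpha> (X v ^ b))" if "1 \<le> snd v" for v b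
    by (induction b) (simp_all add: contract_Dp_mult contract_Dp_X[OF that, of _ "fst v", simplified]
        contract_pC[of _ 1, simplified] Dw_lC[of 1, simplified])
  have mon: "contract \<alpha> (Dp (monom_poly \<mu>)) = Dw (contract \<alpha> (monom_poly \<mu>))" if "\<mu> \<in> Poly_Mapping.keys P" for \<mu>
  proof -
    have "contract \<alpha> (Dp (\<Prod>v\<in>V. X v ^ Poly_Mapping.lookup \<mu> v))
        = Dw (contract \<alpha> (\<Prod>v\<in>V. X v ^ Poly_Mapping.lookup \<mu> v))"
      if "V \<subseteq> Poly_Mapping.keys \<mu>" for V
      using finite_subset[OF that finite_keys] that
    proof (induction V rule: finite_induct)
      case (insert v V)
      then have "1 \<le> snd v" using assms \<open>\<mu> \<in> Poly_Mapping.keys P\<close> by (auto simp: deriv_only_def)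
      with insert show ?case by (simp add: contract_Dp_mult X_pow)
    qed (simp add: contract_pC[of _ 1, simplified] Dw_lC[of 1, simplified])
    then show ?thesis by (simp add: monom_poly_eq_prod)
  qed
  have "P = (\<Sum>\<mu>\<in>Poly_Mapping.keys P. pC (Poly_Mapping.lookup P \<mu>) * monom_poly \<mu>)"
    by (subst poly_mapping_sum_single) (simp add: single_eq_pC_monom_poly)
  also have "contract \<alpha> (Dp \<dots>) = Dw (contract \<alpha> \<dots>)"
    by (simp add: Dp_sum contract_sum Dw_sum Dp_pC_mult contract_mult contract_pC Dw_lC_mult mon)
  finally show ?thesis .
qed

text \<open>The coefficient of \<open>u\<^sup>t\<close> in \<open>e\<^bsup>(\<alpha>,\<phi>)\<^esup>(z) :P e\<^bsup>(\<beta>,\<phi>)\<^esup>:(w)\<close>, where \<open>d = (\<alpha>, \<beta>)\<close>, after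
  Taylor-expanding the regular part of \<open>e\<^bsup>(\<alpha>,\<phi>)\<^esup>(z)\<close> around \<open>w\<close>.\<close>

definition ope_coeff :: "nat \<Rightarrow> vec \<Rightarrow> dpoly \<Rightarrow> int \<Rightarrow> int \<Rightarrow> dpoly" where
  "ope_coeff N \<alpha> P d t = conv_coeff (Lsing \<alpha> P d) (Sch_int N \<alpha>) t"

lemma res_poly_eq_ope_coeff: "res_poly N \<alpha> P d = ope_coeff N \<alpha> P d (- 1)"
proof -
  let ?L = "Lsing \<alpha> P d"
  have "ope_coeff N \<alpha> P d (- 1) = (\<Sum>s\<in>Poly_Mapping.keys ?L. Poly_Mapping.lookup ?L s * Sch_int N \<alpha> (- 1 - s))"
    by (simp add: ope_coeff_def conv_coeff_def sum_terms_def)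
  also have "\<dots> = (\<Sum>s\<in>{s\<in>Poly_Mapping.keys ?L. s \<le> - 1}. Poly_Mapping.lookup ?L s * Sch_int N \<alpha> (- 1 - s))"
    by (rule sum.mono_neutral_right) (auto simp: Sch_int_def)
  also have "\<dots> = (\<Sum>r\<in>{r::nat. - 1 - int r \<in> Poly_Mapping.keys ?L}. Poly_Mapping.lookup ?L (- 1 - int r) * Sch N \<alpha> r)"
  proof (rule sum.reindex_bij_witness[where i = "\<lambda>r. - 1 - int r" and j = "\<lambda>s. nat (- 1 - s)"])
    fix s assume s: "s \<in> {s\<in>Poly_Mapping.keys ?L. s \<le> - 1}"
    then have s_eq: "- 1 - int (nat (- 1 - s)) = s" by simp
    show "- 1 - int (nat (- 1 - s)) = s" by (rule s_eq)
    show "nat (- 1 - s) \<in> {r. - 1 - int r \<in> Poly_Mapping.keys ?L}"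
      using s by (simp only: s_eq mem_Collect_eq)
    show "Poly_Mapping.lookup ?L (- 1 - int (nat (- 1 - s))) * Sch N \<alpha> (nat (- 1 - s))
        = Poly_Mapping.lookup ?L s * Sch_int N \<alpha> (- 1 - s)"
      using s by (simp only: s_eq Sch_int_def) simp
  qed auto
  finally show ?thesis by (simp add: res_poly_def)
qed

lemma ope_coeff_add: "ope_coeff N \<alpha> (P + Q) d t = ope_coeff N \<alpha> P d t + ope_coeff N \<alpha> Q d t"
  by (simp add: ope_coeff_def Lsing_eq_contract contract_add distrib_left conv_coeff_add)

lemma ope_coeff_pC_mult: "ope_coeff N \<alpha> (pC c * P) d t = pC c * ope_coeff N \<alpha> P d t"
proof -
  have "Lsing \<alpha> (pC c * P) d = lC (pC c) * Lsing \<alpha> P d"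
    by (simp add: Lsing_eq_contract contract_mult contract_pC algebra_simps)
  then show ?thesis by (simp add: ope_coeff_def conv_coeff_lC_mult)
qed

lemma ope_coeff_pC: "ope_coeff N \<alpha> (pC c) d t = pC c * Sch_int N \<alpha> (t - d)"
proof -
  have "Lsing \<alpha> (pC c) d = lC (pC c) * (U d * Poly_Mapping.single 0 1)"
    by (simp add: Lsing_eq_contract contract_pC mult.commute)
  then show ?thesis by (simp add: ope_coeff_def conv_coeff_lC_mult U_def conv_coeff_single)
qed

text \<open>A current \<open>(v, \<partial>\<phi>)\<close> contracts with \<open>e\<^bsup>(\<alpha>,\<phi>)\<^esup>\<close> to \<open>(\<alpha>, v) / u\<close>.\<close>

lemma ope_coeff_cur_mult:
  "ope_coeff N \<alpha> (cur N v 1 * P) d t = cur N v 1 * ope_coeff N \<alpha> P d t - pC (ip N \<alpha> v) * ope_coeff N \<alpha> P d (t + 1)"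
proof -
  have "Lsing \<alpha> (cur N v 1 * P) d = lC (cur N v 1) * Lsing \<alpha> P d - lC (pC (ip N \<alpha> v)) * (U (- 1) * Lsing \<alpha> P d)"
    by (simp add: Lsing_eq_contract contract_mult contract_cur algebra_simps)
  then show ?thesis by (simp add: ope_coeff_def conv_coeff_diff conv_coeff_lC_mult conv_coeff_U_mult)
qed

lemma conv_coeff_Dw_Sch_int:
  "conv_coeff (Dw L) (Sch_int N \<alpha>) t = Dp (conv_coeff L (Sch_int N \<alpha>) t) + cur N \<alpha> 1 * conv_coeff L (Sch_int N \<alpha>) t
     - pC (of_int (t + 1)) * conv_coeff L (Sch_int N \<alpha>) (t + 1)"
proof -
  let ?S = "Sch_int N \<alpha>"
  have "conv_coeff (Du L) ?S t
      = conv_coeff L (\<lambda>r. pC (of_int (t + 1)) * ?S r - pC (of_int r) * ?S r) (t + 1)"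
    by (simp add: conv_coeff_Du pC_diff left_diff_distrib)
  also have "\<dots> = pC (of_int (t + 1)) * conv_coeff L ?S (t + 1) - conv_coeff L (\<lambda>r. pC (of_int (r + 1)) * ?S (r + 1)) t"
    by (simp add: conv_coeff_seq_diff conv_coeff_seq_scale conv_coeff_shift)
  also have "\<dots> = pC (of_int (t + 1)) * conv_coeff L ?S (t + 1)
      - (conv_coeff L (\<lambda>r. Dp (?S r)) t + cur N \<alpha> 1 * conv_coeff L ?S t)"
    by (simp only: Sch_int_recursion conv_coeff_seq_add conv_coeff_seq_scale)
  finally show ?thesis
    by (simp add: Dw_def conv_coeff_diff Dp_conv_coeff)
qed

text \<open>Differentiating \<open>P\<close> also differentiates the factor \<open>u\<^sup>d\<close>, hence the last term.\<close>

lemma ope_coeff_Dp: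
  assumes "deriv_only P"
  shows "ope_coeff N \<alpha> (Dp P) d t = Dp (ope_coeff N \<alpha> P d t) + cur N \<alpha> 1 * ope_coeff N \<alpha> P d t
     - pC (of_int (t + 1)) * ope_coeff N \<alpha> P d (t + 1) + pC (of_int d) * ope_coeff N \<alpha> P d (t + 1)"
proof -
  let ?L = "Lsing \<alpha> P d"
  have "Dw (U d) * contract \<alpha> P = - (lC (pC (of_int d)) * (U (- 1) * ?L))"
    by (simp only: Dw_U Lsing_eq_contract mult.assoc[symmetric] U_mult mult_minus_left)
       (simp add: mult.assoc)
  then have "Lsing \<alpha> (Dp P) d = Dw ?L + lC (pC (of_int d)) * (U (- 1) * ?L)"
    by (simp add: Lsing_eq_contract contract_Dp[OF assms] Dw_mult)
  then show ?thesis
    by (simp only: ope_coeff_def conv_coeff_add conv_coeff_lC_mult conv_coeff_U_mult conv_coeff_Dw_Sch_int)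
       simp
qed

lemma ope_coeff_fder:
  assumes "deriv_only P" "of_int d = ip N \<alpha> \<beta>"
  shows "ope_coeff N \<alpha> (fst (fder N (P, \<beta>))) d t
    = Dp (ope_coeff N \<alpha> P d t) + (cur N \<alpha> 1 + cur N \<beta> 1) * ope_coeff N \<alpha> P d t
      - pC (of_int (t + 1)) * ope_coeff N \<alpha> P d (t + 1)"
proof -
  have "ope_coeff N \<alpha> (fst (fder N (P, \<beta>))) d t = ope_coeff N \<alpha> (Dp P) d t + ope_coeff N \<alpha> (cur N \<beta> 1 * P) d t"
    by (simp add: fder_def ope_coeff_add mult.commute)
  also have "\<dots> = Dp (ope_coeff N \<alpha> P d t) + cur N \<alpha> 1 * ope_coeff N \<alpha> P d t
     - pC (of_int (t + 1)) * ope_coeff N \<alpha> P d (t + 1) + pC (ip N \<alpha> \<beta>) * ope_coeff N \<alpha> P d (t + 1)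
     + (cur N \<beta> 1 * ope_coeff N \<alpha> P d t - pC (ip N \<alpha> \<beta>) * ope_coeff N \<alpha> P d (t + 1))"
    by (simp only: ope_coeff_Dp[OF assms(1)] ope_coeff_cur_mult assms(2))
  finally show ?thesis by (simp add: algebra_simps)
qed

section \<open>The recursive construction of \<open>\<F>\<close>\<close>

lemma cur_scale: "cur N (\<lambda>j. c * v j) m = pC c * cur N v m"
  by (simp add: cur_def pC_mult sum_distrib_left mult.assoc)

lemma cur_add: "cur N (\<lambda>j. v j + w j) m = cur N v m + cur N w m"
  by (simp add: cur_def pC_add distrib_right sum.distrib)

lemma cur_diff: "cur N (\<lambda>j. v j - w j) m = cur N v m - cur N w m"
  by (simp add: cur_def pC_diff left_diff_distrib sum_subtractf)

lemma cur_uminus: "cur N (- v) m = - cur N v m"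
  by (simp add: cur_def pC_uminus sum_negf)

lemma cur_sum: "cur N (\<lambda>j. \<Sum>i\<in>I. f i j) m = (\<Sum>i\<in>I. cur N (f i) m)"
  by (simp add: cur_def pC_sum sum_distrib_right sum.swap[of _ I])

lemma ip_sym: "ip N x y = ip N y x"
  by (simp add: ip_def mult.commute)

lemma ip_scale: "ip N x (\<lambda>j. c * v j) = c * ip N x v"
  by (simp add: ip_def sum_distrib_left algebra_simps)

lemma ip_add: "ip N x (\<lambda>j. v j + w j) = ip N x v + ip N x w"
  by (simp add: ip_def distrib_left sum.distrib)

lemma ip_uminus: "ip N x (- v) = - ip N x v"
  by (simp add: ip_def sum_negf)

lemma ip_sum: "ip N x (\<lambda>j. \<Sum>i\<in>I. f i j) = (\<Sum>i\<in>I. ip N x (f i))"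
  by (simp add: ip_def sum_distrib_left sum.swap[of _ I])

text \<open>With the step constant \<open>\<kappa> = k + n - 1\<close> held fixed, \<open>Fseq m\<close> is \<open>\<F>\<close> at rank \<open>m\<close> and level
  \<open>\<kappa> + 1 - m\<close>; the term \<open>\<kappa> \<xi>\<close> of \<open>Jvec\<close> absorbs the derivative of \<open>e\<^bsup>-\<Xi>\<^esup>\<close>.\<close>

definition Jvec :: "complex \<Rightarrow> (nat \<Rightarrow> vec) \<Rightarrow> vec \<Rightarrow> vec \<Rightarrow> nat \<Rightarrow> vec" where
  "Jvec \<kappa> a \<psi> \<xi> m = (\<lambda>j. \<kappa> * \<xi> j + \<psi> j + (\<Sum>i\<in>{1..m}. a i j))"

primrec Fseq :: "nat \<Rightarrow> complex \<Rightarrow> (nat \<Rightarrow> vec) \<Rightarrow> vec \<Rightarrow> vec \<Rightarrow> nat \<Rightarrow> vfield" where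
  "Fseq N \<kappa> a \<psi> \<xi> 0 = (pC (- 1), - \<xi>)"
| "Fseq N \<kappa> a \<psi> \<xi> (Suc m) =
     fadd (fscale \<kappa> (fder N (Fseq N \<kappa> a \<psi> \<xi> m))) (fmul (cur N (Jvec \<kappa> a \<psi> \<xi> m) 1) (Fseq N \<kappa> a \<psi> \<xi> m))"

lemma Jvec_Suc: "Jvec \<kappa> a \<psi> \<xi> (Suc m) = (\<lambda>j. Jvec \<kappa> a \<psi> \<xi> m j + a (Suc m) j)"
  by (simp add: Jvec_def add.assoc)

lemma cur_Jvec: "cur N (Jvec \<kappa> a \<psi> \<xi> m) 1 = pC \<kappa> * cur N \<xi> 1 + cur N \<psi> 1 + (\<Sum>i\<in>{1..m}. cur N (a i) 1)"
  by (simp add: Jvec_def cur_add cur_scale cur_sum)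

lemma ip_Jvec: "ip N x (Jvec \<kappa> a \<psi> \<xi> m) = \<kappa> * ip N x \<xi> + ip N x \<psi> + (\<Sum>i\<in>{1..m}. ip N x (a i))"
  by (simp add: Jvec_def ip_add ip_scale ip_sum)

lemma snd_Fseq: "snd (Fseq N \<kappa> a \<psi> \<xi> m) = - \<xi>"
  by (induction m) (simp_all add: fadd_def fscale_def fder_def)

lemma Fseq_Suc_eq:
  "Fseq N \<kappa> a \<psi> \<xi> (Suc m) =
    (pC \<kappa> * fst (fder N (fst (Fseq N \<kappa> a \<psi> \<xi> m), - \<xi>))
      + cur N (Jvec \<kappa> a \<psi> \<xi> m) 1 * fst (Fseq N \<kappa> a \<psi> \<xi> m), - \<xi>)"
  using snd_Fseq[of N \<kappa> a \<psi> \<xi> m]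
  by (cases "Fseq N \<kappa> a \<psi> \<xi> m") (simp add: fadd_def fscale_def fder_def fmul_def)

declare Fseq.simps(2) [simp del]

lemma deriv_only_Fseq: "deriv_only (fst (Fseq N \<kappa> a \<psi> \<xi> m))"
proof (induction m)
  case 0
  show ?case by (simp add: deriv_only_pC)
next
  case (Suc m)
  then show ?case
    by (simp only: Fseq_Suc_eq fder_def fst_conv)
       (intro deriv_only_add deriv_only_mult deriv_only_Dp deriv_only_cur deriv_only_pC; simp)
qed

lemma Fseq_eq_Fcal:
  assumes "1 \<le> m"
  shows "Fseq N \<kappa> a \<psi> \<xi> m = Fcal N m (\<kappa> + 1 - of_nat m) a \<psi> \<xi>"
proof -
  let ?A = "\<lambda>i. cur N (a i) 1" and ?Q = "cur N \<psi> 1"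
  have "fst (Fseq N \<kappa> a \<psi> \<xi> m) = - Pcal (\<kappa> + 1 - of_nat m) m ?A ?Q"
    using assms
  proof (induction m)
    case (Suc m)
    show ?case
    proof (cases m)
      case 0
      then show ?thesis
        by (simp add: Fseq_Suc_eq fder_def cur_Jvec cur_uminus pC_uminus Dp_uminus algebra_simps)
    next
      case (Suc p)
      let ?P = "Pcal (\<kappa> + 1 - of_nat m) m ?A ?Q"
      have "Pcal (\<kappa> + 1 - of_nat (Suc m)) (Suc m) ?A ?Q = pC \<kappa> * Dp ?P + (?Q + (\<Sum>i\<in>{1..m}. ?A i)) * ?P"
        by (simp add: Suc algebra_simps)
      moreover have "fst (Fseq N \<kappa> a \<psi> \<xi> m) = - ?P"
        using Suc.IH Suc by simp
      ultimately show ?thesis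
        by (simp add: Fseq_Suc_eq fder_def cur_Jvec cur_uminus Dp_uminus algebra_simps)
    qed
  qed simp
  then show ?thesis
    by (simp add: Fcal_def prod_eq_iff snd_Fseq)
qed

lemma ope_coeff_Fseq_Suc:
  assumes "of_int d = ip N \<alpha> (- \<xi>)"
  shows "ope_coeff N \<alpha> (fst (Fseq N \<kappa> a \<psi> \<xi> (Suc m))) d t =
    pC \<kappa> * (Dp (ope_coeff N \<alpha> (fst (Fseq N \<kappa> a \<psi> \<xi> m)) d t)
      + (cur N \<alpha> 1 - cur N \<xi> 1) * ope_coeff N \<alpha> (fst (Fseq N \<kappa> a \<psi> \<xi> m)) d t
      - pC (of_int (t + 1)) * ope_coeff N \<alpha> (fst (Fseq N \<kappa> a \<psi> \<xi> m)) d (t + 1))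
    + cur N (Jvec \<kappa> a \<psi> \<xi> m) 1 * ope_coeff N \<alpha> (fst (Fseq N \<kappa> a \<psi> \<xi> m)) d t
    - pC (ip N \<alpha> (Jvec \<kappa> a \<psi> \<xi> m)) * ope_coeff N \<alpha> (fst (Fseq N \<kappa> a \<psi> \<xi> m)) d (t + 1)"
  by (simp only: Fseq_Suc_eq fst_conv ope_coeff_add ope_coeff_pC_mult ope_coeff_cur_mult
      ope_coeff_fder[OF deriv_only_Fseq assms] cur_uminus diff_conv_add_uminus add.assoc)

lemma ope_coeff_Fseq_regular:
  assumes "ip N \<alpha> \<xi> = 0" "\<forall>l<m. ip N \<alpha> (Jvec \<kappa> a \<psi> \<xi> l) = 0"
  shows "ope_coeff N \<alpha> (fst (Fseq N \<kappa> a \<psi> \<xi> m)) 0 t = fst (Fseq N \<kappa> a \<psi> \<xi> m) * Sch_int N \<alpha> t"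
  using assms(2)
proof (induction m arbitrary: t)
  case 0
  show ?case by (simp add: ope_coeff_pC)
next
  case (Suc m)
  let ?P = "fst (Fseq N \<kappa> a \<psi> \<xi> m)"
  have d: "of_int 0 = ip N \<alpha> (- \<xi>)" using assms(1) by (simp add: ip_uminus)
  have "ope_coeff N \<alpha> (fst (Fseq N \<kappa> a \<psi> \<xi> (Suc m))) 0 t =
    pC \<kappa> * (Dp (?P * Sch_int N \<alpha> t) + (cur N \<alpha> 1 - cur N \<xi> 1) * (?P * Sch_int N \<alpha> t)
             - ?P * (pC (of_int (t + 1)) * Sch_int N \<alpha> (t + 1)))
    + cur N (Jvec \<kappa> a \<psi> \<xi> m) 1 * (?P * Sch_int N \<alpha> t)"
    using Suc by (simp add: ope_coeff_Fseq_Suc[OF d] algebra_simps)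
  also have "\<dots> = fst (Fseq N \<kappa> a \<psi> \<xi> (Suc m)) * Sch_int N \<alpha> t"
    by (simp only: Sch_int_recursion Fseq_Suc_eq fder_def fst_conv cur_uminus)
       (simp add: Dp_mult cur_uminus algebra_simps)
  finally show ?case .
qed

lemma ope_coeff_Fseq_Suc_res:
  assumes "of_int d = ip N \<alpha> (- \<xi>)" "ip N \<alpha> (Jvec \<kappa> a \<psi> \<xi> m) = 0"
    and "ope_coeff N \<alpha> (fst (Fseq N \<kappa> a \<psi> \<xi> m)) d (- 1) = 0"
  shows "ope_coeff N \<alpha> (fst (Fseq N \<kappa> a \<psi> \<xi> (Suc m))) d (- 1) = 0"
  using assms by (simp add: ope_coeff_Fseq_Suc)

text \<open>The pole terms cancel because \<open>(\<psi>, Jvec 0) = \<kappa> + 1\<close>.\<close>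

lemma ope_coeff_Fseq_1_res:
  assumes "ip N \<psi> \<psi> = 1" "ip N \<psi> \<xi> = 1"
  shows "ope_coeff N \<psi> (fst (Fseq N \<kappa> a \<psi> \<xi> 1)) (- 1) (- 1) = 0"
proof -
  have d: "of_int (- 1) = ip N \<psi> (- \<xi>)" using assms by (simp add: ip_uminus)
  have "ip N \<psi> (Jvec \<kappa> a \<psi> \<xi> 0) = \<kappa> + 1"
    using assms by (simp add: ip_Jvec)
  moreover have "ope_coeff N \<psi> (fst (Fseq N \<kappa> a \<psi> \<xi> 0)) (- 1) t = - Sch_int N \<psi> (t + 1)" for t
    by (simp only: Fseq.simps(1) fst_conv ope_coeff_pC) (simp add: pC_uminus)
  ultimately have "ope_coeff N \<psi> (fst (Fseq N \<kappa> a \<psi> \<xi> (Suc 0))) (- 1) (- 1) = 0"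
    using ope_coeff_Fseq_Suc[OF d, where \<kappa> = \<kappa> and a = a and \<psi> = \<psi> and m = 0 and t = "- 1"]
    by (simp add: Sch_int_0 Sch_int_1 cur_Jvec pC_add Dp_uminus algebra_simps)
  then show ?thesis by (simp add: One_nat_def)
qed

text \<open>The screening current \<open>e\<^bsup>(\<alpha>,\<phi>)\<^esup>\<close> with \<open>\<alpha> = a (p + 1)\<close> first meets \<open>Fseq\<close> at step \<open>p + 1\<close>,
  where \<open>(\<alpha>, Jvec p) = -(\<kappa> + 1)\<close>; one step later \<open>(\<alpha>, Jvec (p + 1)) = \<kappa> + 1\<close> and the residue
  cancels.\<close>

lemma ope_coeff_Fseq_creation_res:
  assumes "ip N \<alpha> \<xi> = 0" "\<forall>l<p. ip N \<alpha> (Jvec \<kappa> a \<psi> \<xi> l) = 0"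
    and "ip N \<alpha> (Jvec \<kappa> a \<psi> \<xi> p) = - (\<kappa> + 1)" "ip N \<alpha> \<alpha> = 2 * (\<kappa> + 1)" "a (Suc p) = \<alpha>"
  shows "ope_coeff N \<alpha> (fst (Fseq N \<kappa> a \<psi> \<xi> (Suc (Suc p)))) 0 (- 1) = 0"
proof -
  let ?P = "fst (Fseq N \<kappa> a \<psi> \<xi> p)" and ?A = "cur N \<alpha> 1" and ?Y = "cur N \<xi> 1"
  let ?C = "ope_coeff N \<alpha> (fst (Fseq N \<kappa> a \<psi> \<xi> (Suc p))) 0"
  let ?J = "cur N (Jvec \<kappa> a \<psi> \<xi> p) 1"
  have d: "of_int 0 = ip N \<alpha> (- \<xi>)" using assms(1) by (simp add: ip_uminus)
  have reg: "ope_coeff N \<alpha> ?P 0 t = ?P * Sch_int N \<alpha> t" for t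
    by (rule ope_coeff_Fseq_regular[OF assms(1,2)])
  have C_neg: "?C (- 1) = pC (\<kappa> + 1) * ?P"
    using ope_coeff_Fseq_Suc[OF d, where \<kappa> = \<kappa> and a = a and \<psi> = \<psi> and m = p and t = "- 1"] assms(3)
    by (simp add: reg Sch_int_neg Sch_int_0 pC_uminus pC_diff pC_add algebra_simps)
  have C_0: "?C 0 = pC \<kappa> * (Dp ?P + (?A - ?Y) * ?P - ?P * ?A) + ?J * ?P + pC (\<kappa> + 1) * (?P * ?A)"
    using ope_coeff_Fseq_Suc[OF d, where \<kappa> = \<kappa> and a = a and \<psi> = \<psi> and m = p and t = 0] assms(3)
    by (simp add: reg Sch_int_0 Sch_int_1 pC_uminus pC_diff pC_add algebra_simps)
  have "ip N \<alpha> (Jvec \<kappa> a \<psi> \<xi> (Suc p)) = \<kappa> + 1"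
    using assms(3-5) by (simp add: Jvec_Suc ip_add)
  moreover have "cur N (Jvec \<kappa> a \<psi> \<xi> (Suc p)) 1 = ?J + ?A"
    using assms(5) by (simp add: Jvec_Suc cur_add)
  ultimately show ?thesis
    using ope_coeff_Fseq_Suc[OF d, where \<kappa> = \<kappa> and a = a and \<psi> = \<psi> and m = "Suc p" and t = "- 1"]
    by (simp add: C_neg C_0 Dp_add Dp_pC_mult pC_add algebra_simps)
qed

lemma ell_combination:
  assumes "2 \<le> n"
  shows "of_nat n * ell n k - (of_nat n - 1) * ell (n - 1) (k + 1) = k + of_nat n - 1"
proof -
  have "(of_nat (n - 1) :: complex) = of_nat n - 1" and "(of_nat n :: complex) \<noteq> 0"
    and "(of_nat n - 1 :: complex) \<noteq> 0"
    using assms by (simp_all add: of_nat_diff)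
  then show ?thesis
    by (simp add: ell_def field_simps)
qed

lemma weighted_sum_combination:
  fixes y :: "nat \<Rightarrow> complex"
  assumes "2 \<le> n"
  shows "of_nat n * (\<Sum>i\<in>{1..n-1}. (of_nat n - of_nat i) / of_nat n * y i)
      - (of_nat n - 1) * (\<Sum>i\<in>{1..n-2}. (of_nat (n - 1) - of_nat i) / of_nat (n - 1) * y i)
    = (\<Sum>i\<in>{1..n-1}. y i)"
proof -
  have nz: "(of_nat n :: complex) \<noteq> 0" "(of_nat (n - 1) :: complex) \<noteq> 0"
    and n1: "(of_nat (n - 1) :: complex) = of_nat n - 1"
    using assms by (simp_all add: of_nat_diff)
  have "of_nat n * (\<Sum>i\<in>{1..n-1}. (of_nat n - of_nat i) / of_nat n * y i)
      = (\<Sum>i\<in>{1..n-1}. (of_nat n - of_nat i) * y i)"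
    unfolding sum_distrib_left by (rule sum.cong) (use assms in simp_all)
  moreover have "(of_nat n - 1) * (\<Sum>i\<in>{1..n-2}. (of_nat (n - 1) - of_nat i) / of_nat (n - 1) * y i)
      = (\<Sum>i\<in>{1..n-2}. (of_nat n - 1 - of_nat i) * y i)"
    unfolding sum_distrib_left n1[symmetric] by (rule sum.cong) (use nz in simp_all)
  moreover obtain p where n: "n = Suc (Suc p)"
    using assms by (metis add_2_eq_Suc le_Suc_ex)
  then have "(\<Sum>i\<in>{1..n-1}. (of_nat n - 1 - of_nat i) * y i) = (\<Sum>i\<in>{1..n-2}. (of_nat n - 1 - of_nat i) * y i)"
    by simp
  moreover have "(\<Sum>i\<in>{1..n-1}. (of_nat n - of_nat i) * y i)
      = (\<Sum>i\<in>{1..n-1}. (of_nat n - 1 - of_nat i) * y i) + (\<Sum>i\<in>{1..n-1}. y i)"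
    by (simp add: sum.distrib[symmetric] algebra_simps)
  ultimately show ?thesis
    by simp
qed

definition Hvec :: "nat \<Rightarrow> complex \<Rightarrow> (nat \<Rightarrow> vec) \<Rightarrow> vec \<Rightarrow> vec \<Rightarrow> vec" where
  "Hvec n k a \<psi> \<xi> = (\<lambda>j. ell n k * \<xi> j + (\<Sum>i\<in>{1..n-1}. (of_nat n - of_nat i) / of_nat n * a i j) + \<psi> j)"

lemma Hcal_eq_cur: "Hcal N n k a \<psi> \<xi> = cur N (Hvec n k a \<psi> \<xi>) 1"
  by (simp only: Hcal_def Hvec_def cur_add cur_scale cur_sum)

lemma Hcal_combination:
  assumes "2 \<le> n"
  shows "pC (of_nat n) * Hcal N n k a \<psi> \<xi> - pC (of_nat n - 1) * Hcal N (n - 1) (k + 1) a \<psi> \<xi>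
    = cur N (Jvec (k + of_nat n - 1) a \<psi> \<xi> (n - 1)) 1"
proof -
  have "of_nat n * Hvec n k a \<psi> \<xi> j - (of_nat n - 1) * Hvec (n - 1) (k + 1) a \<psi> \<xi> j
      = (k + of_nat n - 1) * \<xi> j + (\<Sum>i\<in>{1..n-1}. a i j) + \<psi> j" for j
  proof -
    have "of_nat n * Hvec n k a \<psi> \<xi> j - (of_nat n - 1) * Hvec (n - 1) (k + 1) a \<psi> \<xi> j
      = (of_nat n * ell n k - (of_nat n - 1) * ell (n - 1) (k + 1)) * \<xi> j
        + (of_nat n * (\<Sum>i\<in>{1..n-1}. (of_nat n - of_nat i) / of_nat n * a i j)
          - (of_nat n - 1) * (\<Sum>i\<in>{1..n-2}. (of_nat (n - 1) - of_nat i) / of_nat (n - 1) * a i j))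
        + \<psi> j"
      by (simp add: Hvec_def algebra_simps)
    then show ?thesis
      by (simp only: ell_combination[OF assms] weighted_sum_combination[OF assms])
  qed
  then have "(\<lambda>j. of_nat n * Hvec n k a \<psi> \<xi> j - (of_nat n - 1) * Hvec (n - 1) (k + 1) a \<psi> \<xi> j)
      = Jvec (k + of_nat n - 1) a \<psi> \<xi> (n - 1)"
    by (simp add: fun_eq_iff Jvec_def algebra_simps)
  then show ?thesis
    by (simp add: Hcal_eq_cur cur_scale[symmetric] cur_diff[symmetric])
qed

lemma Fcal_recursion:
  assumes "2 \<le> n"
  shows "Fcal N n k a \<psi> \<xi> =
    fadd (fscale (k + of_nat n - 1) (fder N (Fcal N (n - 1) (k + 1) a \<psi> \<xi>)))
      (fmul (pC (of_nat n) * Hcal N n k a \<psi> \<xi> - pC (of_nat n - 1) * Hcal N (n - 1) (k + 1) a \<psi> \<xi>)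
        (Fcal N (n - 1) (k + 1) a \<psi> \<xi>))"
proof -
  let ?\<kappa> = "k + of_nat n - 1"
  have "Fcal N n k a \<psi> \<xi> = Fseq N ?\<kappa> a \<psi> \<xi> n"
    using Fseq_eq_Fcal[of n N ?\<kappa>] assms by simp
  moreover have "Fcal N (n - 1) (k + 1) a \<psi> \<xi> = Fseq N ?\<kappa> a \<psi> \<xi> (n - 1)"
    using Fseq_eq_Fcal[of "n - 1" N ?\<kappa>] assms by (simp add: of_nat_diff algebra_simps)
  moreover have "Fseq N ?\<kappa> a \<psi> \<xi> n = Fseq N ?\<kappa> a \<psi> \<xi> (Suc (n - 1))"
    using assms by simp
  ultimately show ?thesis
    by (simp only: Fseq.simps(2) Hcal_combination[OF assms])
qed

section \<open>The screenings of the \<open>n[0]\<close> realization\<close>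

locale n0_realization =
  fixes n :: nat and k :: complex and a :: "nat \<Rightarrow> vec" and \<psi> \<xi> :: vec
  assumes n_ge_2: "n \<ge> 2"
    and ip_a_a: "\<forall>i\<in>{1..n-1}. ip (n+1) (a i) (a i) = 2 * (k + of_nat n)"
    and ip_a_a_Suc: "\<forall>i\<in>{1..n-2}. ip (n+1) (a i) (a (i+1)) = - (k + of_nat n)"
    and ip_a_a_far: "\<forall>i\<in>{1..n-1}. \<forall>j\<in>{1..n-1}. i + 1 < j \<longrightarrow> ip (n+1) (a i) (a j) = 0"
    and ip_a_1_psi: "ip (n+1) (a 1) \<psi> = - (k + of_nat n)"
    and ip_a_psi: "\<forall>i\<in>{2..n-1}. ip (n+1) (a i) \<psi> = 0"
    and ip_a_xi: "\<forall>i\<in>{1..n-1}. ip (n+1) (a i) \<xi> = 0"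
    and ip_psi_psi: "ip (n+1) \<psi> \<psi> = 1" and ip_psi_xi: "ip (n+1) \<psi> \<xi> = 1"
begin

abbreviation K :: complex where "K \<equiv> k + of_nat n"

abbreviation J :: "nat \<Rightarrow> vec" where "J \<equiv> Jvec (K - 1) a \<psi> \<xi>"

abbreviation G :: "nat \<Rightarrow> vfield" where "G \<equiv> Fseq (n+1) (K - 1) a \<psi> \<xi>"

lemma ip_a_a_cases:
  assumes "i \<in> {1..n-1}" "l \<in> {1..n-1}"
  shows "ip (n+1) (a i) (a l) = (if l = i then 2 * K else if l = i + 1 \<or> l + 1 = i then - K else 0)"
proof -
  consider "l = i" | "l = i + 1" | "l + 1 = i" | "i + 1 < l" | "l + 1 < i" by linarith
  then show ?thesis
  proof cases
    case 3
    then show ?thesis using ip_a_a_Suc assms by (auto simp: ip_sym)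
  next
    case 5
    then have "ip (n+1) (a l) (a i) = 0" using ip_a_a_far assms by auto
    with 5 show ?thesis by (simp add: ip_sym)
  qed (use ip_a_a ip_a_a_Suc ip_a_a_far assms in auto)
qed

lemma ip_a_J:
  assumes "i \<in> {1..n-1}" "m \<le> n - 1"
  shows "ip (n+1) (a i) (J m) = (if m + 1 = i then - K else if m = i then K else 0)"
  using assms(2)
proof (induction m)
  case 0
  show ?case using assms(1) ip_a_xi ip_a_1_psi ip_a_psi by (auto simp: ip_Jvec)
next
  case (Suc m)
  then have "ip (n+1) (a i) (J (Suc m)) = ip (n+1) (a i) (J m) + ip (n+1) (a i) (a (Suc m))"
    by (simp add: Jvec_Suc ip_add)
  with Suc assms(1) show ?case
    by (simp add: ip_a_a_cases)
qed

lemma ip_psi_J: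
  assumes "m \<le> n - 1"
  shows "ip (n+1) \<psi> (J m) = (if m = 0 then K else 0)"
  using assms
proof (induction m)
  case 0
  show ?case by (simp add: ip_Jvec ip_psi_psi ip_psi_xi)
next
  case (Suc m)
  have "ip (n+1) \<psi> (a (Suc m)) = (if m = 0 then - K else 0)"
    using Suc.prems ip_a_1_psi ip_a_psi by (auto simp: ip_sym One_nat_def)
  with Suc show ?case
    by (simp add: Jvec_Suc ip_add)
qed

lemma res_G_psi: "1 \<le> m \<Longrightarrow> m \<le> n \<Longrightarrow> ope_coeff (n+1) \<psi> (fst (G m)) (- 1) (- 1) = 0"
proof (induction m rule: dec_induct)
  case base
  show ?case by (rule ope_coeff_Fseq_1_res[OF ip_psi_psi ip_psi_xi])
next
  case (step m)
  show ?case
  proof (rule ope_coeff_Fseq_Suc_res)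
    show "of_int (- 1) = ip (n+1) \<psi> (- \<xi>)" by (simp add: ip_uminus ip_psi_xi)
    show "ip (n+1) \<psi> (J m) = 0" using step by (simp add: ip_psi_J)
  qed (use step in simp)
qed

lemma res_G_a:
  assumes "i \<in> {1..n-1}" "i < m" "m \<le> n"
  shows "ope_coeff (n+1) (a i) (fst (G m)) 0 (- 1) = 0"
proof -
  have "Suc i \<le> m" using assms(2) by simp
  then show ?thesis
    using assms(3)
  proof (induction m rule: dec_induct)
    case base
    obtain p where i: "i = Suc p" using assms(1) by (cases i) auto
    have "ope_coeff (n+1) (a i) (fst (G (Suc (Suc p)))) 0 (- 1) = 0"
    proof (rule ope_coeff_Fseq_creation_res)
      show "ip (n+1) (a i) \<xi> = 0" using ip_a_xi assms(1) by simp
      show "\<forall>l<p. ip (n+1) (a i) (J l) = 0" "ip (n+1) (a i) (J p) = - (K - 1 + 1)"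
        using assms(1) by (auto simp: ip_a_J i)
      show "ip (n+1) (a i) (a i) = 2 * (K - 1 + 1)" using ip_a_a assms(1) by simp
    qed (simp add: i)
    then show ?case by (simp add: i)
  next
    case (step m)
    show ?case
    proof (rule ope_coeff_Fseq_Suc_res)
      show "of_int 0 = ip (n+1) (a i) (- \<xi>)" using ip_a_xi assms(1) by (simp add: ip_uminus)
      show "ip (n+1) (a i) (J m) = 0" using step assms(1) by (simp add: ip_a_J)
    qed (use step in simp)
  qed
qed

lemma in_W_Fcal: "in_W n a \<psi> \<xi> (Fcal (n+1) n k a \<psi> \<xi>)"
proof -
  have F: "Fcal (n+1) n k a \<psi> \<xi> = G n"
    using Fseq_eq_Fcal[of n "n+1" "K - 1"] n_ge_2 by simp
  have "snd (G n) = (\<lambda>j. of_int (- 1) * \<xi> j)"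
    by (simp add: snd_Fseq fun_eq_iff)
  moreover have "commutes_scr (n+1) (a i) (G n)" if "i \<in> {1..n-1}" for i
    using that ip_a_xi res_G_a[OF that] n_ge_2
    by (auto simp: commutes_scr_def snd_Fseq ip_uminus res_poly_eq_ope_coeff intro!: exI[of _ 0])
  moreover have "commutes_scr (n+1) \<psi> (G n)"
    using res_G_psi[of n] n_ge_2
    by (auto simp: commutes_scr_def snd_Fseq ip_uminus ip_psi_xi res_poly_eq_ope_coeff intro!: exI[of _ "- 1"])
  ultimately show ?thesis
    unfolding F in_W_def by blast
qed

end

theorem lemma2p3:
  fixes n :: nat and k :: complex and a :: "nat \<Rightarrow> vec" and \<psi> \<xi> :: vec
  assumes "n \<ge> 2" and "k \<noteq> - of_nat n"
    and "\<forall>i\<in>{1..n-1}. ip (n+1) (a i) (a i) = 2 * (k + of_nat n)"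
    and "\<forall>i\<in>{1..n-2}. ip (n+1) (a i) (a (i+1)) = - (k + of_nat n)"
    and "\<forall>i\<in>{1..n-1}. \<forall>j\<in>{1..n-1}. i + 1 < j \<longrightarrow> ip (n+1) (a i) (a j) = 0"
    and "ip (n+1) (a 1) \<psi> = - (k + of_nat n)"
    and "\<forall>i\<in>{2..n-1}. ip (n+1) (a i) \<psi> = 0"
    and "\<forall>i\<in>{1..n-1}. ip (n+1) (a i) \<xi> = 0"
    and "ip (n+1) \<psi> \<psi> = 1" and "ip (n+1) \<psi> \<xi> = 1" and "ip (n+1) \<xi> \<xi> = 0"
  shows "in_W n a \<psi> \<xi> (Fcal (n+1) n k a \<psi> \<xi>)
    \<and> Fcal (n+1) n k a \<psi> \<xi> =
        fadd (fscale (k + of_nat n - 1) (fder (n+1) (Fcal (n+1) (n-1) (k+1) a \<psi> \<xi>)))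
         (fmul (pC (of_nat n) * Hcal (n+1) n k a \<psi> \<xi>
                - pC (of_nat n - 1) * Hcal (n+1) (n-1) (k+1) a \<psi> \<xi>)
               (Fcal (n+1) (n-1) (k+1) a \<psi> \<xi>))"
proof -
  interpret n0_realization n k a \<psi> \<xi>
    using assms by unfold_locales auto
  show ?thesis
    by (intro conjI in_W_Fcal Fcal_recursion[OF assms(1)])
qed

end
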